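(* Let $A$ be a finite-dimensional associative algebra over $K=\mathbb{R}$ or $\mathbb{C}$, let $\mathfrak g$ be a Lie subalgebra of $A_L$, and let $r\in\mathfrak g\wedge\mathfrak g$ satisfy the classical Yang–Baxter equation $[r^{12},r^{13}]+[r^{12},r^{23}]+[r^{13},r^{23}]=0$. Then $\delta(X)=rX-Xr$, $X\in\mathrm{Symm}(A\otimes A)$, defines (via its dual) a quadratic Poisson bracket on $A$ compatible with the multiplication of $A$.
   Context: $A_L$ is the Lie algebra on $A$ with bracket $[a,b]=ab-ba$. $A\otimes A$ is an algebra with componentwise multiplication; $\mathrm{Symm}(A\otimes A)$ are the symmetric tensors. For $r=\sum_i\alpha_i\otimes\beta_i$, $r^{12}=\sum_i\alpha_i\otimes\beta_i\otimes1$, $r^{13}=\sum_i\alpha_i\otimes1\otimes\beta_i$, $r^{23}=\sum_i1\otimes\alpha_i\otimes\beta_i$ with $1$ a formal unit; the commutators only involve Lie brackets in $\mathfrak g$ (e.g. $[a\otimes b\otimes1,c\otimes1\otimes d]=[a,c]\otimes b\otimes d$). The bracket defined by $\delta$ is the one whose values on linear functions are given by the dual map $\delta^*\colon A^*\wedge A^*\to\mathrm{Sym}^2(A^* )$ (identifying $\mathrm{Symm}(A\otimes A)$ with $(\mathrm{Sym}^2A^* )^*$ and $A\wedge A$ with $(A^*\wedge A^* )^*$), extended by the Leibniz rule. Compatibility means the multiplication map $A\times A\to A$ is a Poisson map when $A\times A$ carries the product Poisson structure. *)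

theory Defs
  imports Complex_Main "HOL-Library.Poly_Mapping"
begin

class real_or_complex = field_char_0
instance real :: real_or_complex ..
instance complex :: real_or_complex ..

text \<open>A has basis e_0..e_(n-1); elements are coordinate vectors  nat => K  vanishing
  at indices >= n; the product is given by structure constants
  e_i e_j = sum_k c i j k e_k.\<close>

definition vecs :: "nat \<Rightarrow> (nat \<Rightarrow> 'k::zero) set" where
  "vecs n = {a. \<forall>i\<ge>n. a i = 0}"

definition amul :: "nat \<Rightarrow> (nat \<Rightarrow> nat \<Rightarrow> nat \<Rightarrow> 'k::comm_ring_1) \<Rightarrow> (nat \<Rightarrow> 'k) \<Rightarrow> (nat \<Rightarrow> 'k) \<Rightarrow> nat \<Rightarrow> 'k" where
  "amul n c a b = (\<lambda>k. if k < n then (\<Sum>i<n. \<Sum>j<n. a i * b j * c i j k) else 0)"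

definition assoc_alg :: "nat \<Rightarrow> (nat \<Rightarrow> nat \<Rightarrow> nat \<Rightarrow> 'k::comm_ring_1) \<Rightarrow> bool" where
  "assoc_alg n c \<longleftrightarrow> (\<forall>a\<in>vecs n. \<forall>b\<in>vecs n. \<forall>d\<in>vecs n.
      amul n c (amul n c a b) d = amul n c a (amul n c b d))"

definition lie :: "nat \<Rightarrow> (nat \<Rightarrow> nat \<Rightarrow> nat \<Rightarrow> 'k::comm_ring_1) \<Rightarrow> (nat \<Rightarrow> 'k) \<Rightarrow> (nat \<Rightarrow> 'k) \<Rightarrow> nat \<Rightarrow> 'k" where
  "lie n c a b = (\<lambda>k. amul n c a b k - amul n c b a k)"

definition lie_subalgebra :: "nat \<Rightarrow> (nat \<Rightarrow> nat \<Rightarrow> nat \<Rightarrow> 'k::comm_ring_1) \<Rightarrow> (nat \<Rightarrow> 'k) set \<Rightarrow> bool" where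
  "lie_subalgebra n c G \<longleftrightarrow> G \<subseteq> vecs n \<and> (\<lambda>_. 0) \<in> G
     \<and> (\<forall>a\<in>G. \<forall>b\<in>G. (\<lambda>i. a i + b i) \<in> G) \<and> (\<forall>s. \<forall>a\<in>G. (\<lambda>i. s * a i) \<in> G)
     \<and> (\<forall>a\<in>G. \<forall>b\<in>G. lie n c a b \<in> G)"

text \<open>2-tensors in A (x) A are coefficient arrays  nat => nat => K  w.r.t. e_i (x) e_j.\<close>

text \<open>r \<in> g \<and> g: r lies in g (x) g (a finite sum of alpha_s (x) beta_s with
  alpha_s, beta_s in g) and is skew-symmetric.\<close>
definition in_wedge :: "(nat \<Rightarrow> 'k::comm_ring_1) set \<Rightarrow> (nat \<Rightarrow> nat \<Rightarrow> 'k) \<Rightarrow> bool" where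
  "in_wedge G r \<longleftrightarrow>
     (\<exists>(m::nat) \<alpha> \<beta>. (\<forall>s<m. \<alpha> s \<in> G \<and> \<beta> s \<in> G) \<and> r = (\<lambda>i j. \<Sum>s<m. \<alpha> s i * \<beta> s j))
     \<and> (\<forall>i j. r i j = - r j i)"

definition lc :: "(nat \<Rightarrow> nat \<Rightarrow> nat \<Rightarrow> 'k::comm_ring_1) \<Rightarrow> nat \<Rightarrow> nat \<Rightarrow> nat \<Rightarrow> 'k" where
  "lc c a b k = c a b k - c b a k"

text \<open>Coordinates (w.r.t. e_k (x) e_l (x) e_m) of the three commutators of the CYBE,
  for r = sum_s alpha_s (x) beta_s:
  [r12,r13] = sum [alpha_s,alpha_t] (x) beta_s (x) beta_t,
  [r12,r23] = sum alpha_s (x) [beta_s,alpha_t] (x) beta_t,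
  [r13,r23] = sum alpha_s (x) alpha_t (x) [beta_s,beta_t].\<close>
definition comm_12_13 :: "nat \<Rightarrow> (nat \<Rightarrow> nat \<Rightarrow> nat \<Rightarrow> 'k::comm_ring_1) \<Rightarrow> (nat \<Rightarrow> nat \<Rightarrow> 'k) \<Rightarrow> nat \<Rightarrow> nat \<Rightarrow> nat \<Rightarrow> 'k" where
  "comm_12_13 n c r k l m = (\<Sum>a<n. \<Sum>b<n. r a l * r b m * lc c a b k)"
definition comm_12_23 :: "nat \<Rightarrow> (nat \<Rightarrow> nat \<Rightarrow> nat \<Rightarrow> 'k::comm_ring_1) \<Rightarrow> (nat \<Rightarrow> nat \<Rightarrow> 'k) \<Rightarrow> nat \<Rightarrow> nat \<Rightarrow> nat \<Rightarrow> 'k" where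
  "comm_12_23 n c r k l m = (\<Sum>a<n. \<Sum>b<n. r k a * r b m * lc c a b l)"
definition comm_13_23 :: "nat \<Rightarrow> (nat \<Rightarrow> nat \<Rightarrow> nat \<Rightarrow> 'k::comm_ring_1) \<Rightarrow> (nat \<Rightarrow> nat \<Rightarrow> 'k) \<Rightarrow> nat \<Rightarrow> nat \<Rightarrow> nat \<Rightarrow> 'k" where
  "comm_13_23 n c r k l m = (\<Sum>a<n. \<Sum>b<n. r k a * r l b * lc c a b m)"

definition CYBE :: "nat \<Rightarrow> (nat \<Rightarrow> nat \<Rightarrow> nat \<Rightarrow> 'k::comm_ring_1) \<Rightarrow> (nat \<Rightarrow> nat \<Rightarrow> 'k) \<Rightarrow> bool" where
  "CYBE n c r \<longleftrightarrow> (\<forall>k<n. \<forall>l<n. \<forall>m<n.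
     comm_12_13 n c r k l m + comm_12_23 n c r k l m + comm_13_23 n c r k l m = 0)"

text \<open>Componentwise multiplication in A (x) A: (a (x) b)(a' (x) b') = aa' (x) bb'.\<close>
definition tmul :: "nat \<Rightarrow> (nat \<Rightarrow> nat \<Rightarrow> nat \<Rightarrow> 'k::comm_ring_1) \<Rightarrow> (nat \<Rightarrow> nat \<Rightarrow> 'k) \<Rightarrow> (nat \<Rightarrow> nat \<Rightarrow> 'k) \<Rightarrow> nat \<Rightarrow> nat \<Rightarrow> 'k" where
  "tmul n c X Y = (\<lambda>k l. if k < n \<and> l < n then
     (\<Sum>a<n. \<Sum>b<n. \<Sum>a'<n. \<Sum>b'<n. X a b * Y a' b' * c a a' k * c b b' l) else 0)"

definition symm_tensor :: "nat \<Rightarrow> (nat \<Rightarrow> nat \<Rightarrow> 'k::zero) \<Rightarrow> bool" where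
  "symm_tensor n X \<longleftrightarrow> (\<forall>i j. X i j = X j i) \<and> (\<forall>i j. n \<le> i \<or> n \<le> j \<longrightarrow> X i j = 0)"

definition skew_tensor :: "nat \<Rightarrow> (nat \<Rightarrow> nat \<Rightarrow> 'k::ab_group_add) \<Rightarrow> bool" where
  "skew_tensor n X \<longleftrightarrow> (\<forall>i j. X i j = - X j i) \<and> (\<forall>i j. n \<le> i \<or> n \<le> j \<longrightarrow> X i j = 0)"

definition delta :: "nat \<Rightarrow> (nat \<Rightarrow> nat \<Rightarrow> nat \<Rightarrow> 'k::comm_ring_1) \<Rightarrow> (nat \<Rightarrow> nat \<Rightarrow> 'k) \<Rightarrow> (nat \<Rightarrow> nat \<Rightarrow> 'k) \<Rightarrow> nat \<Rightarrow> nat \<Rightarrow> 'k" where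
  "delta n c r X = (\<lambda>i j. tmul n c r X i j - tmul n c X r i j)"

text \<open>Polynomials in the variables x_0, x_1, ... (x_i = i-th linear coordinate).\<close>
type_synonym 'k mpoly = "(nat \<Rightarrow>\<^sub>0 nat) \<Rightarrow>\<^sub>0 'k"

definition Var :: "nat \<Rightarrow> 'k::comm_ring_1 mpoly" where
  "Var i = Poly_Mapping.single (Poly_Mapping.single i 1) 1"

definition Const :: "'k::comm_ring_1 \<Rightarrow> 'k mpoly" where
  "Const s = Poly_Mapping.single 0 s"

text \<open>Substitution of polynomials for the variables (pull-back along a polynomial map).\<close>
definition subst :: "(nat \<Rightarrow> 'k::comm_ring_1 mpoly) \<Rightarrow> 'k mpoly \<Rightarrow> 'k mpoly" where
  "subst \<sigma> p = (\<Sum>mo\<in>Poly_Mapping.keys p. Const (Poly_Mapping.lookup p mo) * (\<Prod>v\<in>Poly_Mapping.keys mo. (\<sigma> v) ^ (Poly_Mapping.lookup mo v)))"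

text \<open>Symmetric basis tensor S_ab = (e_a (x) e_b + e_b (x) e_a)/2 of Symm(A (x) A);
  every symmetric X equals sum_(a,b) X a b S_ab.\<close>
definition sym_basis :: "nat \<Rightarrow> nat \<Rightarrow> nat \<Rightarrow> nat \<Rightarrow> 'k::field" where
  "sym_basis a b = (\<lambda>i j. ((if i = a \<and> j = b then 1 else 0) + (if i = b \<and> j = a then 1 else 0)) / 2)"

text \<open>With the pairings
  <Q, X> = sum Q a b * X a b  (Q in Sym^2 A^* as symmetric coefficient array, X symmetric) and
  <w, W> = sum w i j * W i j, and x_i \<and> x_j = x_i (x) x_j - x_j (x) x_i,
  the element delta^*(x_i \<and> x_j) has coefficient array dual_delta ... i j.\<close>
definition dual_delta :: "nat \<Rightarrow> (nat \<Rightarrow> nat \<Rightarrow> nat \<Rightarrow> 'k::field) \<Rightarrow> (nat \<Rightarrow> nat \<Rightarrow> 'k) \<Rightarrow> nat \<Rightarrow> nat \<Rightarrow> nat \<Rightarrow> nat \<Rightarrow> 'k" where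
  "dual_delta n c r i j a b = delta n c r (sym_basis a b) i j - delta n c r (sym_basis a b) j i"

text \<open>Quadratic polynomial corresponding to delta^*(x_i \<and> x_j): this is the value of the
  bracket {x_i, x_j} on linear coordinate functions.\<close>
definition lin_bracket :: "nat \<Rightarrow> (nat \<Rightarrow> nat \<Rightarrow> nat \<Rightarrow> 'k::field) \<Rightarrow> (nat \<Rightarrow> nat \<Rightarrow> 'k) \<Rightarrow> nat \<Rightarrow> nat \<Rightarrow> 'k mpoly" where
  "lin_bracket n c r i j = (\<Sum>a<n. \<Sum>b<n. Const (dual_delta n c r i j a b) * Var a * Var b)"

definition poisson_bracket :: "('k::comm_ring_1 mpoly \<Rightarrow> 'k mpoly \<Rightarrow> 'k mpoly) \<Rightarrow> bool" where
  "poisson_bracket B \<longleftrightarrow>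
     (\<forall>p q s. B (p + q) s = B p s + B q s)
   \<and> (\<forall>t p q. B (Const t * p) q = Const t * B p q)
   \<and> (\<forall>p q. B p q = - B q p)
   \<and> (\<forall>p q s. B p (q * s) = B p q * s + q * B p s)
   \<and> (\<forall>p q s. B p (B q s) + B q (B s p) + B s (B p q) = 0)"

text \<open>The bracket on A defined by delta: extends {x_i,x_j} = delta^*(x_i \<and> x_j) (i,j < n);
  variables with index >= n are not coordinates of A and are declared Casimir (bracket 0).\<close>
definition brackets_on_A :: "nat \<Rightarrow> (nat \<Rightarrow> nat \<Rightarrow> nat \<Rightarrow> 'k::field) \<Rightarrow> (nat \<Rightarrow> nat \<Rightarrow> 'k) \<Rightarrow> ('k mpoly \<Rightarrow> 'k mpoly \<Rightarrow> 'k mpoly) \<Rightarrow> bool" where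
  "brackets_on_A n c r B \<longleftrightarrow>
     (\<forall>i j. B (Var i) (Var j) = (if i < n \<and> j < n then lin_bracket n c r i j else 0))"

text \<open>Polynomials on A \<times> A: variables x_0..x_(n-1) (first factor) and x_n..x_(2n-1)
  (second factor). shift moves a polynomial on A to the second factor.\<close>
definition shift :: "nat \<Rightarrow> 'k::comm_ring_1 mpoly \<Rightarrow> 'k mpoly" where
  "shift n = subst (\<lambda>v. Var (n + v))"

definition brackets_on_AxA :: "nat \<Rightarrow> (nat \<Rightarrow> nat \<Rightarrow> nat \<Rightarrow> 'k::field) \<Rightarrow> (nat \<Rightarrow> nat \<Rightarrow> 'k) \<Rightarrow> ('k mpoly \<Rightarrow> 'k mpoly \<Rightarrow> 'k mpoly) \<Rightarrow> bool" where
  "brackets_on_AxA n c r B2 \<longleftrightarrow>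
     (\<forall>i j. B2 (Var i) (Var j) =
        (if i < n \<and> j < n then lin_bracket n c r i j
         else if n \<le> i \<and> i < 2*n \<and> n \<le> j \<and> j < 2*n then shift n (lin_bracket n c r (i - n) (j - n))
         else 0))"

text \<open>Pull-back along the multiplication map m: A \<times> A -> A, (p,q) |-> pq:
  x_k \<circ> m = sum_(i,j) c i j k x_i y_j.\<close>
definition mult_pullback :: "nat \<Rightarrow> (nat \<Rightarrow> nat \<Rightarrow> nat \<Rightarrow> 'k::comm_ring_1) \<Rightarrow> 'k mpoly \<Rightarrow> 'k mpoly" where
  "mult_pullback n c = subst (\<lambda>k. if k < n then (\<Sum>i<n. \<Sum>j<n. Const (c i j k) * Var i * Var (n + j)) else 0)"

end

theory Submission
  imports Defs
begin

(*
  Let L_a and R_a be the linear vector fields on A generated by left and right multiplication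
  by the basis vector e_a.  Dualising delta shows that {x_i, x_j} is the value on x_i, x_j of
  the bivector 2 (r^L - r^R), where r^L = sum r_ab L_a L_b and r^R = sum r_ab R_a R_b.  By
  associativity a |-> L_a and a |-> R_a are an anti-representation and a representation of A_L
  whose images commute, so the Jacobiator of this bivector is a combination of the CYBE
  expressions of r and vanishes.  The same construction on the two factors of A x A gives the
  product structure.  Under multiplication m(x, y) = x y the left fields of the first factor and
  the right fields of the second factor become the left and right fields of A, while the right
  fields of the first factor and the left fields of the second agree on functions pulled back
  along m, since (x e_a) y = x (e_a y), so their contributions cancel: m is a Poisson map.
*)

section \<open>Polynomial functions\<close>

abbreviation lookup :: "('a \<Rightarrow>\<^sub>0 'b::zero) \<Rightarrow> 'a \<Rightarrow> 'b" where
  "lookup \<equiv> Poly_Mapping.lookup"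

abbreviation single :: "'a \<Rightarrow> 'b \<Rightarrow> 'a \<Rightarrow>\<^sub>0 'b::zero" where
  "single \<equiv> Poly_Mapping.single"

lemma Const_add: "Const (a + b) = Const a + Const b"
  unfolding Const_def by (simp add: single_add)

lemma Const_mult: "Const (a * b) = (Const a * Const b :: 'k::comm_ring_1 mpoly)"
  unfolding Const_def by (simp add: mult_single)

lemma Const_0 [simp]: "Const 0 = 0"
  unfolding Const_def by simp

lemma Const_1 [simp]: "Const 1 = 1"
  unfolding Const_def by simp

lemma Const_uminus: "Const (- a) = - Const a"
  unfolding Const_def by (simp add: single_uminus)

lemma Const_diff: "Const (a - b) = Const a - Const b"
  unfolding Const_def by (simp add: single_diff)

lemma Const_sum: "Const (sum f A) = (\<Sum>x\<in>A. Const (f x))"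
  by (induction A rule: infinite_finite_induct) (auto simp: Const_add)

lemma update_eq_plus_single:
  "a \<notin> Poly_Mapping.keys f \<Longrightarrow> Poly_Mapping.update a b f = f + single a b"
  by (intro poly_mapping_eqI) (auto simp: lookup_update lookup_add lookup_single in_keys_iff)

lemma mpoly_single_induct:
  assumes "P 0" "\<And>m a. P (single m a)" "\<And>p q. P p \<Longrightarrow> P q \<Longrightarrow> P (p + q)"
  shows "P p"
  by (induction p rule: update_induct) (simp_all add: assms update_eq_plus_single)

lemma mpoly_induct [case_names Const Var add mult]:
  fixes p :: "'k::comm_ring_1 mpoly"
  assumes Const: "\<And>a. P (Const a)" and Var: "\<And>v. P (Var v)"
    and add: "\<And>p q. P p \<Longrightarrow> P q \<Longrightarrow> P (p + q)" and mult: "\<And>p q. P p \<Longrightarrow> P q \<Longrightarrow> P (p * q)"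
  shows "P p"
proof -
  have Var_power: "single (single v k) 1 = (Var v ^ k :: 'k mpoly)" for v k
  proof (induction k)
    case (Suc k)
    have "single (single v (Suc k)) (1::'k)
        = Var v * single (single v k) 1"
      by (simp add: Var_def mult_single flip: single_add)
    with Suc show ?case by simp
  qed simp
  have monomial: "P (single m 1)" for m
  proof (induction m rule: update_induct)
    case const
    show ?case using Const[of 1] by (simp add: Const_def)
  next
    case (update m v k)
    then have "single (Poly_Mapping.update v k m) (1::'k)
        = single m 1 * Var v ^ k"
      by (simp add: update_eq_plus_single mult_single flip: Var_power)
    moreover have "P (Var v ^ k)"
      by (induction k) (use Const[of 1] Var mult in \<open>simp_all add: Const_def\<close>)
    ultimately show ?case using update mult by simp
  qed
  have "P (single m a)" for m a
    using mult[OF Const[of a] monomial[of m]] by (simp add: Const_def mult_single)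
  moreover have "P 0"
    using Const[of 0] by simp
  ultimately show ?thesis
    using add by (blast intro: mpoly_single_induct)
qed

lemma derivation_along_eqI:
  fixes D E h :: "'k::comm_ring_1 mpoly \<Rightarrow> 'k mpoly"
  assumes "\<And>p q. D (p + q) = D p + D q" "\<And>p q. D (p * q) = D p * h q + h p * D q"
    and "\<And>a. D (Const a) = 0"
    and "\<And>p q. E (p + q) = E p + E q" "\<And>p q. E (p * q) = E p * h q + h p * E q"
    and "\<And>a. E (Const a) = 0"
    and "\<And>v. D (Var v) = E (Var v)"
  shows "D p = E p"
  by (induction p rule: mpoly_induct) (simp_all add: assms)

definition pdiff :: "nat \<Rightarrow> 'k::comm_ring_1 mpoly \<Rightarrow> 'k mpoly" where
  "pdiff i p = Abs_poly_mapping (\<lambda>m. of_nat (lookup m i + 1) * lookup p (m + single i 1))"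

lemma lookup_pdiff: "lookup (pdiff i p) m = of_nat (lookup m i + 1) * lookup p (m + single i 1)"
proof -
  let ?shift = "\<lambda>m. m + single i (1::nat)"
  have "finite (?shift -` Poly_Mapping.keys p)"
    by (rule finite_vimageI) (auto simp: inj_def)
  moreover have "{m. of_nat (lookup m i + 1) * lookup p (?shift m) \<noteq> 0} \<subseteq> ?shift -` Poly_Mapping.keys p"
    by (auto simp: in_keys_iff)
  ultimately show ?thesis
    unfolding pdiff_def by (subst lookup_Abs_poly_mapping) (auto elim: finite_subset)
qed

lemma pdiff_add: "pdiff i (p + q) = pdiff i p + pdiff i q"
  by (rule poly_mapping_eqI) (simp add: lookup_pdiff lookup_add algebra_simps)

lemma pdiff_0 [simp]: "pdiff i 0 = 0"
  by (rule poly_mapping_eqI) (simp add: lookup_pdiff)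

lemma pdiff_single: "pdiff i (single m a) = single (m - single i 1) (of_nat (lookup m i) * a)"
proof (rule poly_mapping_eqI)
  fix m'
  show "lookup (pdiff i (single m a)) m' = lookup (single (m - single i 1) (of_nat (lookup m i) * a)) m'"
  proof (cases "m = m' + single i 1")
    case True
    then have "m - single i 1 = m'" and "lookup m i = lookup m' i + 1"
      by (simp_all add: lookup_add)
    with True show ?thesis
      by (simp add: lookup_pdiff lookup_single)
  next
    case False
    have "m - single i 1 \<noteq> m'" if "lookup m i \<noteq> 0"
    proof
      assume "m - single i 1 = m'"
      with that have "m = m' + single i 1"
        by (auto intro!: poly_mapping_eqI simp: lookup_add lookup_minus lookup_single when_def)
      with False show False ..
    qed
    then have "lookup (single (m - single i 1) (of_nat (lookup m i) * a)) m' = 0"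
      by (cases "lookup m i = 0") (simp_all add: lookup_single when_def)
    with False show ?thesis
      by (simp add: lookup_pdiff lookup_single when_def)
  qed
qed

lemma pdiff_Const [simp]: "pdiff i (Const a) = 0"
  unfolding Const_def by (simp add: pdiff_single)

lemma pdiff_Var: "pdiff i (Var j) = (if i = j then 1 else 0)"
  unfolding Var_def by (auto simp: pdiff_single lookup_single)

lemma pdiff_single_mult:
  "pdiff i (single m a * single m' b) = pdiff i (single m a) * single m' b + single m a * pdiff i (single m' b)"
proof -
  let ?e = "single i (1::nat)"
  have shift: "x - ?e + y = x + y - ?e" if "lookup x i \<noteq> 0" for x y
    using that by (auto intro!: poly_mapping_eqI simp: lookup_add lookup_minus lookup_single when_def)
  have left: "single (m - ?e) (of_nat (lookup m i) * a) * single m' b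
      = single (m + m' - ?e) (of_nat (lookup m i) * a * b)"
    using shift[of m m'] by (cases "lookup m i = 0") (simp_all add: mult_single)
  have right: "single m a * single (m' - ?e) (of_nat (lookup m' i) * b)
      = single (m + m' - ?e) (of_nat (lookup m' i) * a * b)"
    using shift[of m' m] by (cases "lookup m' i = 0") (simp_all add: mult_single add.commute mult_ac)
  have "pdiff i (single m a * single m' b)
      = single (m + m' - ?e) (of_nat (lookup m i) * a * b + of_nat (lookup m' i) * a * b)"
    by (simp add: mult_single pdiff_single lookup_add algebra_simps)
  also have "\<dots> = single (m + m' - ?e) (of_nat (lookup m i) * a * b)
      + single (m + m' - ?e) (of_nat (lookup m' i) * a * b)"
    by (rule single_add)
  finally show ?thesis
    unfolding pdiff_single left right .
qed

lemma pdiff_mult: "pdiff i (p * q) = pdiff i p * q + p * pdiff i q"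
proof (induction p rule: mpoly_single_induct)
  case (2 m a)
  show ?case
  proof (induction q rule: mpoly_single_induct)
    case (2 m' b)
    then show ?case by (rule pdiff_single_mult)
  qed (simp_all add: distrib_left pdiff_add algebra_simps)
qed (simp_all add: distrib_right pdiff_add algebra_simps)

lemma pdiff_commute: "pdiff i (pdiff j p) = pdiff j (pdiff i p)"
proof (rule poly_mapping_eqI)
  fix m :: "nat \<Rightarrow>\<^sub>0 nat"
  have "lookup (m + single i 1) j = lookup m j + (if i = j then 1 else 0)"
    and "lookup (m + single j 1) i = lookup m i + (if i = j then 1 else 0)"
    by (auto simp: lookup_add lookup_single)
  moreover have "m + single i 1 + single j 1 = m + single j 1 + single i 1"
    by (simp add: ac_simps)
  ultimately show "lookup (pdiff i (pdiff j p)) m = lookup (pdiff j (pdiff i p)) m"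
    by (cases "i = j") (simp_all add: lookup_pdiff mult_ac)
qed

lemma pdiff_sum: "pdiff i (sum f A) = (\<Sum>x\<in>A. pdiff i (f x))"
  by (induction A rule: infinite_finite_induct) (auto simp: pdiff_add)

lemma subst_add: "subst \<sigma> (p + q) = subst \<sigma> p + subst \<sigma> q"
  unfolding subst_def by (rule setsum_keys_plus_distrib) (auto simp: Const_add algebra_simps)

lemma subst_0 [simp]: "subst \<sigma> 0 = 0"
  unfolding subst_def by simp

lemma subst_single:
  "subst \<sigma> (single m a)
     = Const a * (\<Prod>v\<in>Poly_Mapping.keys m. \<sigma> v ^ lookup m v)"
  unfolding subst_def by auto

lemma subst_mult: "subst \<sigma> (p * q) = subst \<sigma> p * subst \<sigma> q"
proof (induction p rule: mpoly_single_induct)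
  case (2 m a)
  show ?case
  proof (induction q rule: mpoly_single_induct)
    case (2 m' b)
    let ?K = "Poly_Mapping.keys m \<union> Poly_Mapping.keys m'"
    have monomial: "(\<Prod>v\<in>Poly_Mapping.keys x. \<sigma> v ^ lookup x v)
        = (\<Prod>v\<in>?K. \<sigma> v ^ lookup x v)" if "Poly_Mapping.keys x \<subseteq> ?K" for x
      by (rule prod.mono_neutral_left) (use that in \<open>auto simp: in_keys_iff\<close>)
    have "Poly_Mapping.keys (m + m') \<subseteq> ?K"
      by (auto simp: in_keys_iff lookup_add)
    then have monomial_add: "(\<Prod>v\<in>Poly_Mapping.keys (m + m'). \<sigma> v ^ lookup (m + m') v)
        = (\<Prod>v\<in>Poly_Mapping.keys m. \<sigma> v ^ lookup m v)
          * (\<Prod>v\<in>Poly_Mapping.keys m'. \<sigma> v ^ lookup m' v)"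
      by (subst (1 2 3) monomial) (auto simp: lookup_add power_add prod.distrib)
    then show ?case
      by (simp only: mult_single subst_single Const_mult monomial_add) (simp only: mult_ac)
  qed (simp_all add: distrib_left subst_add)
qed (simp_all add: distrib_right subst_add)

lemma subst_Const [simp]: "subst \<sigma> (Const a) = Const a"
  using subst_single[of \<sigma> 0 a] by (simp add: Const_def)

lemma subst_Var [simp]: "subst \<sigma> (Var v) = \<sigma> v"
  unfolding Var_def by (simp add: subst_single)

lemma subst_sum: "subst \<sigma> (sum f A) = (\<Sum>x\<in>A. subst \<sigma> (f x))"
  by (induction A rule: infinite_finite_induct) (auto simp: subst_add)

lemma subst_diff: "subst \<sigma> (p - q) = subst \<sigma> p - subst \<sigma> q"
  using subst_add[of \<sigma> "p - q" q] by (simp add: eq_diff_eq)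

lemma subst_Var_id: "subst Var p = p"
  by (induction p rule: mpoly_induct) (simp_all add: subst_add subst_mult)

definition derivation :: "('k::comm_ring_1 mpoly \<Rightarrow> 'k mpoly) \<Rightarrow> bool" where
  "derivation D \<longleftrightarrow> (\<forall>p q. D (p + q) = D p + D q) \<and> (\<forall>p q. D (p * q) = D p * q + p * D q)
     \<and> (\<forall>a. D (Const a) = 0)"

lemma derivation_comp_subst:
  assumes "derivation D"
  shows "D (subst \<sigma> (p + q)) = D (subst \<sigma> p) + D (subst \<sigma> q)"
    and "D (subst \<sigma> (p * q)) = D (subst \<sigma> p) * subst \<sigma> q + subst \<sigma> p * D (subst \<sigma> q)"
    and "D (subst \<sigma> (Const a)) = 0"
  using assms by (simp_all add: derivation_def subst_add subst_mult)

lemma derivation_subst_eqI: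
  assumes D: "derivation D" and E: "derivation E"
    and "\<And>v. D (subst \<sigma> (Var v)) = subst \<sigma> (E (Var v))"
  shows "D (subst \<sigma> f) = subst \<sigma> (E f)"
proof (rule derivation_along_eqI[where D = "\<lambda>f. D (subst \<sigma> f)" and E = "\<lambda>f. subst \<sigma> (E f)"])
  show "subst \<sigma> (E (p + q)) = subst \<sigma> (E p) + subst \<sigma> (E q)"
    and "subst \<sigma> (E (p * q)) = subst \<sigma> (E p) * subst \<sigma> q + subst \<sigma> p * subst \<sigma> (E q)"
    and "subst \<sigma> (E (Const a)) = 0" for p q a
    using E by (simp_all add: derivation_def subst_add subst_mult)
qed (fact derivation_comp_subst[OF D] assms(3))+

lemma derivation_eq_on_subst_image:
  assumes D: "derivation D" and E: "derivation E"
    and "\<And>v. D (subst \<sigma> (Var v)) = E (subst \<sigma> (Var v))"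
  shows "D (subst \<sigma> f) = E (subst \<sigma> f)"
  by (rule derivation_along_eqI[where D = "\<lambda>f. D (subst \<sigma> f)" and E = "\<lambda>f. E (subst \<sigma> f)"])
    (fact derivation_comp_subst[OF D] derivation_comp_subst[OF E] assms(3))+

section \<open>Poisson brackets from bivectors\<close>

lemma sum_swap_pairs:
  "(\<Sum>a\<in>A. \<Sum>b\<in>B. \<Sum>c\<in>C. \<Sum>d\<in>D. f a b c d) = (\<Sum>c\<in>C. \<Sum>d\<in>D. \<Sum>a\<in>A. \<Sum>b\<in>B. f a b c d)"
proof -
  have "(\<Sum>a\<in>A. \<Sum>b\<in>B. \<Sum>c\<in>C. \<Sum>d\<in>D. f a b c d) = (\<Sum>a\<in>A. \<Sum>c\<in>C. \<Sum>b\<in>B. \<Sum>d\<in>D. f a b c d)"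
    by (rule sum.cong[OF refl], rule sum.swap)
  also have "\<dots> = (\<Sum>c\<in>C. \<Sum>a\<in>A. \<Sum>d\<in>D. \<Sum>b\<in>B. f a b c d)"
    by (subst sum.swap) (rule sum.cong[OF refl], rule sum.cong[OF refl], rule sum.swap)
  also have "\<dots> = (\<Sum>c\<in>C. \<Sum>d\<in>D. \<Sum>a\<in>A. \<Sum>b\<in>B. f a b c d)"
    by (rule sum.cong[OF refl], rule sum.swap)
  finally show ?thesis .
qed

lemma sum_rotate3:
  "(\<Sum>a\<in>A. \<Sum>b\<in>B. \<Sum>c\<in>C. f a b c) = (\<Sum>c\<in>C. \<Sum>a\<in>A. \<Sum>b\<in>B. f a b c)"
  by (subst sum.swap) (rule sum.cong[OF refl], rule sum.swap)

lemma sum_block_delta: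
  assumes "finite P" "p \<in> P"
  shows "(\<Sum>t\<in>P \<times> A. if fst t = p then g t else 0) = (\<Sum>b\<in>A. g (p, b))"
proof -
  have "(\<Sum>t\<in>P \<times> A. if fst t = p then g t else 0) = (\<Sum>p'\<in>P. \<Sum>b\<in>A. if p' = p then g (p', b) else 0)"
    by (simp add: sum.cartesian_product split_def) (rule sum.cong; metis prod.collapse)
  also have "\<dots> = (\<Sum>p'\<in>P. if p' = p then \<Sum>b\<in>A. g (p', b) else 0)"
    by (rule sum.cong) simp_all
  also have "\<dots> = (\<Sum>b\<in>A. g (p, b))"
    using assms by simp
  finally show ?thesis .
qed

definition bivector_bracket ::
    "'i set \<Rightarrow> ('i \<Rightarrow> 'i \<Rightarrow> 'a::comm_ring_1) \<Rightarrow> ('i \<Rightarrow> 'a \<Rightarrow> 'a) \<Rightarrow> 'a \<Rightarrow> 'a \<Rightarrow> 'a"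
  where
  "bivector_bracket S L F f g = (\<Sum>i\<in>S. \<Sum>j\<in>S. L i j * (F i f * F j g))"

text \<open>Cyclically summed, this is the Schouten bracket [[L, L]] in coordinates, C being the structure
  constants of the derivations; for skew-symmetric r and C = lc c it is the left-hand side of CYBE.\<close>

definition yb_tensor ::
    "'i set \<Rightarrow> ('i \<Rightarrow> 'i \<Rightarrow> 'a::comm_ring_1) \<Rightarrow> ('i \<Rightarrow> 'i \<Rightarrow> 'i \<Rightarrow> 'a) \<Rightarrow> 'i \<Rightarrow> 'i \<Rightarrow> 'i \<Rightarrow> 'a"
  where
  "yb_tensor S L C i k m = (\<Sum>j\<in>S. \<Sum>l\<in>S. L i j * L k l * C j l m)"

lemma bivector_bracket_nested:
  fixes F :: "'i \<Rightarrow> 'a::comm_ring_1 \<Rightarrow> 'a"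
  assumes add: "\<And>i x y. F i (x + y) = F i x + F i y"
    and mult: "\<And>i x y. F i (x * y) = F i x * y + x * F i y"
    and F_L: "\<And>i j k. F k (L i j) = 0"
  shows "bivector_bracket S L F f (bivector_bracket S L F g h)
    = (\<Sum>i\<in>S. \<Sum>j\<in>S. \<Sum>k\<in>S. \<Sum>l\<in>S. L i j * L k l * (F i f * F j (F k g) * F l h))
      + (\<Sum>i\<in>S. \<Sum>j\<in>S. \<Sum>k\<in>S. \<Sum>l\<in>S. L i j * L k l * (F i f * F k g * F j (F l h)))"
proof -
  have F_0: "F i 0 = 0" for i
    using add[of i 0 0] by simp
  have F_sum: "F i (sum u A) = (\<Sum>a\<in>A. F i (u a))" for i u and A :: "'b set"
    by (induction A rule: infinite_finite_induct) (simp_all add: F_0 add)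
  have "bivector_bracket S L F f (bivector_bracket S L F g h) = (\<Sum>i\<in>S. \<Sum>j\<in>S. \<Sum>k\<in>S. \<Sum>l\<in>S.
      L i j * (F i f * (L k l * (F j (F k g) * F l h + F k g * F j (F l h)))))"
    by (simp add: bivector_bracket_def F_sum mult F_L sum_distrib_left)
  then show ?thesis
    unfolding sum.distrib[symmetric] by (simp add: algebra_simps)
qed

lemma bivector_bracket_jacobi:
  fixes F :: "'i \<Rightarrow> 'a::comm_ring_1 \<Rightarrow> 'a"
  assumes add: "\<And>i x y. F i (x + y) = F i x + F i y"
    and mult: "\<And>i x y. F i (x * y) = F i x * y + x * F i y"
    and F_L: "\<And>i j k. F k (L i j) = 0"
    and skew: "\<And>i j. L i j = - L j i"
    and commutator: "\<And>i j x. i \<in> S \<Longrightarrow> j \<in> S \<Longrightarrow> F i (F j x) - F j (F i x) = (\<Sum>k\<in>S. C i j k * F k x)"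
    and cybe: "\<And>i k m. i \<in> S \<Longrightarrow> k \<in> S \<Longrightarrow> m \<in> S \<Longrightarrow>
      yb_tensor S L C i k m + yb_tensor S L C k m i + yb_tensor S L C m i k = 0"
  defines "B \<equiv> bivector_bracket S L F"
  shows "B f (B g h) + B g (B h f) + B h (B f g) = 0"
proof -
  define T where "T = yb_tensor S L C"
  define X where "X f g h = (\<Sum>i\<in>S. \<Sum>j\<in>S. \<Sum>k\<in>S. \<Sum>l\<in>S. L i j * L k l * (F i f * F k g * F j (F l h)))" for f g h
  define Y where "Y f g h = (\<Sum>i\<in>S. \<Sum>j\<in>S. \<Sum>k\<in>S. \<Sum>l\<in>S. L i j * L k l * (F i f * F j (F k g) * F l h))" for f g h
  define Z where "Z f g h = (\<Sum>i\<in>S. \<Sum>k\<in>S. \<Sum>m\<in>S. T i k m * (F i f * F k g * F m h))" for f g h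
  have double: "B f (B g h) = Y f g h + X f g h" for f g h
    unfolding B_def X_def Y_def using add mult F_L by (rule bivector_bracket_nested)
  have Y_rotate: "Y g h f = - (\<Sum>i\<in>S. \<Sum>j\<in>S. \<Sum>k\<in>S. \<Sum>l\<in>S. L i j * L k l * (F i f * F k g * F l (F j h)))" for f g h
  proof -
    have "Y g h f = (\<Sum>l\<in>S. \<Sum>k\<in>S. \<Sum>i\<in>S. \<Sum>j\<in>S. L i j * L k l * (F i g * F j (F k h) * F l f))"
      unfolding Y_def by (subst sum_swap_pairs) (rule sum.swap)
    also have "\<dots> = - (\<Sum>i\<in>S. \<Sum>j\<in>S. \<Sum>k\<in>S. \<Sum>l\<in>S. L i j * L k l * (F i f * F k g * F l (F j h)))"
      unfolding sum_negf[symmetric] by (intro sum.cong refl) (subst skew, simp add: mult_ac)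
    finally show ?thesis .
  qed
  have second_order: "X f g h + Y g h f = Z f g h" for f g h
  proof -
    have "X f g h + Y g h f = (\<Sum>i\<in>S. \<Sum>j\<in>S. \<Sum>k\<in>S. \<Sum>l\<in>S. L i j * L k l * (F i f * F k g * (F j (F l h) - F l (F j h))))"
      unfolding X_def Y_rotate add_uminus_conv_diff sum_subtractf[symmetric]
      by (intro sum.cong refl) (simp only: right_diff_distrib)
    also have "\<dots> = (\<Sum>i\<in>S. \<Sum>j\<in>S. \<Sum>k\<in>S. \<Sum>l\<in>S. \<Sum>m\<in>S. L i j * L k l * C j l m * (F i f * F k g * F m h))"
      by (intro sum.cong refl) (simp add: commutator sum_distrib_left mult_ac)
    also have "\<dots> = (\<Sum>i\<in>S. \<Sum>k\<in>S. \<Sum>m\<in>S. \<Sum>j\<in>S. \<Sum>l\<in>S. L i j * L k l * C j l m * (F i f * F k g * F m h))"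
      by (rule sum.cong[OF refl], subst sum.swap) (rule sum.cong[OF refl], rule sum_rotate3)
    also have "\<dots> = Z f g h"
      unfolding Z_def T_def yb_tensor_def by (simp add: sum_distrib_right)
    finally show ?thesis .
  qed
  have "Z g h f = (\<Sum>i\<in>S. \<Sum>k\<in>S. \<Sum>m\<in>S. T k m i * (F i f * F k g * F m h))"
    unfolding Z_def by (subst sum_rotate3) (intro sum.cong refl, simp only: mult_ac)
  moreover have "Z h f g = (\<Sum>i\<in>S. \<Sum>k\<in>S. \<Sum>m\<in>S. T m i k * (F i f * F k g * F m h))"
    unfolding Z_def by (subst (2) sum_rotate3) (intro sum.cong refl, simp only: mult_ac)
  ultimately have "Z f g h + Z g h f + Z h f g
      = (\<Sum>i\<in>S. \<Sum>k\<in>S. \<Sum>m\<in>S. (T i k m + T k m i + T m i k) * (F i f * F k g * F m h))"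
    unfolding Z_def by (simp only: sum.distrib[symmetric] distrib_right)
  also have "\<dots> = 0"
    unfolding T_def by (simp add: cybe)
  finally have "Z f g h + Z g h f + Z h f g = 0" .
  moreover have "B f (B g h) + B g (B h f) + B h (B f g) = Z f g h + Z g h f + Z h f g"
    unfolding double second_order[symmetric] by (simp only: add_ac)
  ultimately show ?thesis
    by simp
qed

lemma bivector_bracket_skew:
  assumes "\<And>i j. L i j = - L j i"
  shows "bivector_bracket S L F p q = - bivector_bracket S L F q p"
proof -
  have "bivector_bracket S L F q p = (\<Sum>i\<in>S. \<Sum>j\<in>S. L j i * (F i p * F j q))"
    unfolding bivector_bracket_def by (subst sum.swap) (simp add: mult_ac)
  also have "\<dots> = - bivector_bracket S L F p q"
    unfolding bivector_bracket_def sum_negf[symmetric]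
    by (intro sum.cong refl) (subst assms, simp)
  finally show ?thesis
    by simp
qed

lemma bivector_bracket_poisson:
  fixes F :: "'i \<Rightarrow> 'k::comm_ring_1 mpoly \<Rightarrow> 'k mpoly"
  assumes F_derivation: "\<And>i. derivation (F i)"
    and skew: "\<And>i j. L i j = - L j i"
    and commutator: "\<And>i j p. i \<in> S \<Longrightarrow> j \<in> S \<Longrightarrow> F i (F j p) - F j (F i p) = (\<Sum>k\<in>S. Const (C i j k) * F k p)"
    and cybe: "\<And>i k m. i \<in> S \<Longrightarrow> k \<in> S \<Longrightarrow> m \<in> S \<Longrightarrow>
      yb_tensor S L C i k m + yb_tensor S L C k m i + yb_tensor S L C m i k = 0"
  shows "poisson_bracket (bivector_bracket S (\<lambda>i j. Const (L i j)) F)"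
proof -
  have add: "F i (p + q) = F i p + F i q" and mult: "F i (p * q) = F i p * q + p * F i q"
    and F_Const: "F i (Const a) = 0" for i p q a
    using F_derivation[of i] by (simp_all add: derivation_def)
  let ?L = "\<lambda>i j. Const (L i j)" and ?C = "\<lambda>i j k. Const (C i j k)"
  let ?B = "bivector_bracket S ?L F"
  have Const_skew: "?L i j = - ?L j i" for i j
    using skew[of i j] by (simp add: Const_uminus)
  have jacobi: "?B p (?B q s) + ?B q (?B s p) + ?B s (?B p q) = 0" for p q s
  proof (rule bivector_bracket_jacobi[where C = ?C])
    show "F i (x + y) = F i x + F i y" for i x y by (rule add)
    show "F i (x * y) = F i x * y + x * F i y" for i x y by (rule mult)
    show "F k (?L i j) = 0" for i j k by (rule F_Const)
    show "?L i j = - ?L j i" for i j by (rule Const_skew)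
    show "F i (F j x) - F j (F i x) = (\<Sum>k\<in>S. ?C i j k * F k x)" if "i \<in> S" "j \<in> S" for i j x
      using that by (rule commutator)
    have yb_Const: "yb_tensor S ?L ?C i k m = Const (yb_tensor S L C i k m)" for i k m
      by (simp add: yb_tensor_def Const_sum Const_mult)
    show "yb_tensor S ?L ?C i k m + yb_tensor S ?L ?C k m i + yb_tensor S ?L ?C m i k = 0"
      if "i \<in> S" "k \<in> S" "m \<in> S" for i k m
      using cybe[OF that] by (simp only: yb_Const Const_add[symmetric] Const_0)
  qed
  have additive: "?B (p + q) s = ?B p s + ?B q s" for p q s
    unfolding bivector_bracket_def by (simp add: add sum.distrib[symmetric] algebra_simps)
  have homogeneous: "?B (Const a * p) q = Const a * ?B p q" for a p q
    unfolding bivector_bracket_def by (simp add: mult F_Const sum_distrib_left mult_ac)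
  have skew_symmetric: "?B p q = - ?B q p" for p q
    using Const_skew by (rule bivector_bracket_skew)
  have leibniz: "?B p (q * s) = ?B p q * s + q * ?B p s" for p q s
    unfolding bivector_bracket_def
    by (simp add: mult sum_distrib_left sum_distrib_right sum.distrib[symmetric] algebra_simps)
  show ?thesis
    unfolding poisson_bracket_def using jacobi additive homogeneous skew_symmetric leibniz by blast
qed

definition block_diag2 :: "('p \<Rightarrow> 'i \<Rightarrow> 'i \<Rightarrow> 'a::zero) \<Rightarrow> 'p \<times> 'i \<Rightarrow> 'p \<times> 'i \<Rightarrow> 'a" where
  "block_diag2 L s t = (if fst t = fst s then L (fst s) (snd s) (snd t) else 0)"

definition block_diag3 ::
    "('p \<Rightarrow> 'i \<Rightarrow> 'i \<Rightarrow> 'i \<Rightarrow> 'a::zero) \<Rightarrow> 'p \<times> 'i \<Rightarrow> 'p \<times> 'i \<Rightarrow> 'p \<times> 'i \<Rightarrow> 'a"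
  where
  "block_diag3 C s t u = (if fst t = fst s \<and> fst u = fst s then C (fst s) (snd s) (snd t) (snd u) else 0)"

lemma sum_block_diag2:
  fixes L :: "'p \<Rightarrow> 'i \<Rightarrow> 'i \<Rightarrow> 'a::comm_ring_1"
  assumes "finite P" "s \<in> P \<times> A"
  shows "(\<Sum>t\<in>P \<times> A. block_diag2 L s t * G t) = (\<Sum>b\<in>A. L (fst s) (snd s) b * G (fst s, b))"
proof -
  have "(\<Sum>t\<in>P \<times> A. block_diag2 L s t * G t)
      = (\<Sum>t\<in>P \<times> A. if fst t = fst s then L (fst s) (snd s) (snd t) * G t else 0)"
    by (rule sum.cong) (simp_all add: block_diag2_def)
  with assms show ?thesis
    using sum_block_delta[where g = "\<lambda>t. L (fst s) (snd s) (snd t) * G t"] by auto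
qed

lemma sum_block_diag3:
  fixes C :: "'p \<Rightarrow> 'i \<Rightarrow> 'i \<Rightarrow> 'i \<Rightarrow> 'a::comm_ring_1"
  assumes "finite P" "s \<in> P \<times> A"
  shows "(\<Sum>u\<in>P \<times> A. block_diag3 C s t u * G u)
    = (if fst t = fst s then \<Sum>d\<in>A. C (fst s) (snd s) (snd t) d * G (fst s, d) else 0)"
proof (cases "fst t = fst s")
  case True
  then have "(\<Sum>u\<in>P \<times> A. block_diag3 C s t u * G u)
      = (\<Sum>u\<in>P \<times> A. if fst u = fst s then C (fst s) (snd s) (snd t) (snd u) * G u else 0)"
    by (intro sum.cong) (simp_all add: block_diag3_def)
  with True assms show ?thesis
    using sum_block_delta[where g = "\<lambda>u. C (fst s) (snd s) (snd t) (snd u) * G u"] by auto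
qed (simp add: block_diag3_def)

lemma bivector_bracket_block_diag:
  assumes "finite P"
  shows "bivector_bracket (P \<times> A) (block_diag2 L) (\<lambda>s. F (fst s) (snd s)) f g
    = (\<Sum>p\<in>P. \<Sum>a\<in>A. \<Sum>b\<in>A. L p a b * (F p a f * F p b g))"
proof -
  have "bivector_bracket (P \<times> A) (block_diag2 L) (\<lambda>s. F (fst s) (snd s)) f g
      = (\<Sum>s\<in>P \<times> A. \<Sum>b\<in>A. L (fst s) (snd s) b * (F (fst s) (snd s) f * F (fst s) b g))"
    unfolding bivector_bracket_def using assms
    by (intro sum.cong refl) (simp add: sum_block_diag2[where G = "\<lambda>t. _ * F (fst t) (snd t) g"] mult.assoc)
  also have "\<dots> = (\<Sum>p\<in>P. \<Sum>a\<in>A. \<Sum>b\<in>A. L p a b * (F p a f * F p b g))"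
    using sum.cartesian_product[of "\<lambda>p a. \<Sum>b\<in>A. L p a b * (F p a f * F p b g)" A P]
    by (simp only: case_prod_unfold)
  finally show ?thesis .
qed

lemma yb_tensor_block_diag:
  fixes L :: "'p \<Rightarrow> 'i \<Rightarrow> 'i \<Rightarrow> 'a::comm_ring_1"
  assumes "finite P" and "s \<in> P \<times> A" "t \<in> P \<times> A"
  shows "yb_tensor (P \<times> A) (block_diag2 L) (block_diag3 C) s t u
    = (if fst t = fst s \<and> fst u = fst s
       then yb_tensor A (L (fst s)) (C (fst s)) (snd s) (snd t) (snd u) else 0)"
proof -
  define I where "I j = (if fst t = fst j \<and> fst u = fst j
      then \<Sum>b\<in>A. L (fst t) (snd t) b * C (fst j) (snd j) b (snd u) else 0)" for j
  have inner: "(\<Sum>l\<in>P \<times> A. block_diag2 L t l * block_diag3 C j l u) = I j" for j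
    using sum_block_diag2[OF assms(1,3), where G = "\<lambda>l. block_diag3 C j l u"]
    by (cases "fst t = fst j \<and> fst u = fst j") (auto simp: I_def block_diag3_def)
  have "yb_tensor (P \<times> A) (block_diag2 L) (block_diag3 C) s t u = (\<Sum>j\<in>P \<times> A. block_diag2 L s j * I j)"
    by (simp only: yb_tensor_def mult.assoc flip: sum_distrib_left) (simp only: inner)
  also have "\<dots> = (\<Sum>a\<in>A. L (fst s) (snd s) a * I (fst s, a))"
    by (rule sum_block_diag2[OF assms(1,2)])
  finally show ?thesis
    by (cases "fst t = fst s \<and> fst u = fst s") (auto simp: I_def yb_tensor_def sum_distrib_left mult.assoc)
qed

lemma block_bivector_bracket_poisson:
  fixes F :: "'p \<Rightarrow> 'i \<Rightarrow> 'k::comm_ring_1 mpoly \<Rightarrow> 'k mpoly"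
  assumes "finite P"
    and F_derivation: "\<And>p a. derivation (F p a)"
    and skew: "\<And>p a b. L p a b = - L p b a"
    and commutator: "\<And>p a b f. p \<in> P \<Longrightarrow> a \<in> A \<Longrightarrow> b \<in> A \<Longrightarrow>
        F p a (F p b f) - F p b (F p a f) = (\<Sum>d\<in>A. Const (C p a b d) * F p d f)"
    and commute: "\<And>p p' a b f. p \<in> P \<Longrightarrow> p' \<in> P \<Longrightarrow> p \<noteq> p' \<Longrightarrow> a \<in> A \<Longrightarrow> b \<in> A \<Longrightarrow>
        F p a (F p' b f) = F p' b (F p a f)"
    and cybe: "\<And>p i k m. p \<in> P \<Longrightarrow> i \<in> A \<Longrightarrow> k \<in> A \<Longrightarrow> m \<in> A \<Longrightarrow>
        yb_tensor A (L p) (C p) i k m + yb_tensor A (L p) (C p) k m i + yb_tensor A (L p) (C p) m i k = 0"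
  shows "poisson_bracket (\<lambda>f g. \<Sum>p\<in>P. \<Sum>a\<in>A. \<Sum>b\<in>A. Const (L p a b) * (F p a f * F p b g))"
proof -
  let ?S = "P \<times> A" and ?F = "\<lambda>s. F (fst s) (snd s)"
  have Const_block_diag2: "(\<lambda>s t. Const (block_diag2 L s t)) = block_diag2 (\<lambda>p a b. Const (L p a b))"
    by (auto simp: fun_eq_iff block_diag2_def)
  have Const_block_diag3: "Const (block_diag3 C s t u) = block_diag3 (\<lambda>p a b d. Const (C p a b d)) s t u"
    for s t u
    by (simp add: block_diag3_def)
  have "poisson_bracket (bivector_bracket ?S (\<lambda>s t. Const (block_diag2 L s t)) ?F)"
  proof (rule bivector_bracket_poisson[where C = "block_diag3 C"])
    show "derivation (?F s)" for s
      by (rule F_derivation)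
    show "block_diag2 L s t = - block_diag2 L t s" for s t
      using skew[of "fst s" "snd s" "snd t"] by (auto simp: block_diag2_def)
    show "?F s (?F t f) - ?F t (?F s f) = (\<Sum>u\<in>?S. Const (block_diag3 C s t u) * ?F u f)"
      if "s \<in> ?S" "t \<in> ?S" for s t f
      unfolding Const_block_diag3 sum_block_diag3[OF \<open>finite P\<close> that(1)]
      using that commutator[of "fst s" "snd s" "snd t" f] commute[of "fst s" "fst t" "snd s" "snd t" f]
      by (cases "fst t = fst s") auto
    show "yb_tensor ?S (block_diag2 L) (block_diag3 C) s t u + yb_tensor ?S (block_diag2 L) (block_diag3 C) t u s
        + yb_tensor ?S (block_diag2 L) (block_diag3 C) u s t = 0"
      if "s \<in> ?S" "t \<in> ?S" "u \<in> ?S" for s t u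
      using that cybe[of "fst s" "snd s" "snd t" "snd u"] \<open>finite P\<close>
      by (auto simp: yb_tensor_block_diag)
  qed
  moreover have "bivector_bracket ?S (block_diag2 (\<lambda>p a b. Const (L p a b))) ?F
      = (\<lambda>f g. \<Sum>p\<in>P. \<Sum>a\<in>A. \<Sum>b\<in>A. Const (L p a b) * (F p a f * F p b g))"
    using \<open>finite P\<close> by (intro ext) (rule bivector_bracket_block_diag)
  ultimately show ?thesis
    unfolding Const_block_diag2 by simp
qed

lemma yb_tensor_scale:
  "yb_tensor A (\<lambda>a b. s * L a b) (\<lambda>a b d. t * C a b d) i k m = s * s * t * yb_tensor A L C i k m"
  unfolding yb_tensor_def by (simp add: sum_distrib_left mult_ac)

section \<open>Left and right multiplication vector fields\<close>

text \<open>The vector field x \<mapsto> x M on the copy of K^n whose coordinates are the variables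
  z, \<dots>, z + n - 1.\<close>

definition linear_vf :: "nat \<Rightarrow> nat \<Rightarrow> (nat \<Rightarrow> nat \<Rightarrow> 'k::comm_ring_1) \<Rightarrow> 'k mpoly \<Rightarrow> 'k mpoly" where
  "linear_vf n z M f = (\<Sum>q<n. \<Sum>l<n. Const (M q l) * (Var (z + q) * pdiff (z + l) f))"

lemma linear_vf_add: "linear_vf n z M (f + g) = linear_vf n z M f + linear_vf n z M g"
  unfolding linear_vf_def by (simp add: pdiff_add sum.distrib[symmetric] algebra_simps)

lemma linear_vf_mult: "linear_vf n z M (f * g) = linear_vf n z M f * g + f * linear_vf n z M g"
  unfolding linear_vf_def
  by (simp add: pdiff_mult sum_distrib_left sum_distrib_right sum.distrib[symmetric] algebra_simps)

lemma linear_vf_Const [simp]: "linear_vf n z M (Const a) = 0"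
  unfolding linear_vf_def by simp

lemma linear_vf_0 [simp]: "linear_vf n z M 0 = 0"
  unfolding linear_vf_def by simp

lemma linear_vf_sum: "linear_vf n z M (sum g A) = (\<Sum>x\<in>A. linear_vf n z M (g x))"
  by (induction A rule: infinite_finite_induct) (auto simp: linear_vf_add)

lemma linear_vf_Var:
  assumes "l < n"
  shows "linear_vf n z M (Var (z + l)) = (\<Sum>q<n. Const (M q l) * Var (z + q))"
proof -
  have "linear_vf n z M (Var (z + l)) = (\<Sum>q<n. \<Sum>l'<n. if l' = l then Const (M q l') * Var (z + q) else 0)"
    unfolding linear_vf_def by (intro sum.cong refl) (simp add: pdiff_Var)
  with assms show ?thesis
    by simp
qed

lemma linear_vf_Var_outside:
  assumes "v < z \<or> z + n \<le> v"
  shows "linear_vf n z M (Var v) = 0"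
  unfolding linear_vf_def using assms by (intro sum.neutral ballI) (auto simp: pdiff_Var)

lemma linear_vf_cong:
  "(\<And>q l. q < n \<Longrightarrow> l < n \<Longrightarrow> M q l = M' q l) \<Longrightarrow> linear_vf n z M f = linear_vf n z M' f"
  unfolding linear_vf_def by (intro sum.cong refl) auto

lemma linear_vf_linear_combination:
  "linear_vf n z (\<lambda>q l. \<Sum>k<n. a k * M k q l) f = (\<Sum>k<n. Const (a k) * linear_vf n z (M k) f)"
proof -
  have "linear_vf n z (\<lambda>q l. \<Sum>k<n. a k * M k q l) f
      = (\<Sum>q<n. \<Sum>l<n. \<Sum>k<n. Const (a k) * (Const (M k q l) * (Var (z + q) * pdiff (z + l) f)))"
    unfolding linear_vf_def
    by (intro sum.cong refl) (simp only: Const_sum sum_distrib_right, simp add: Const_mult mult_ac)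
  also have "\<dots> = (\<Sum>k<n. Const (a k) * linear_vf n z (M k) f)"
    unfolding linear_vf_def by (subst sum_rotate3) (simp add: sum_distrib_left)
  finally show ?thesis .
qed

lemma linear_vf_linear_vf:
  "linear_vf n z M (linear_vf n z' N f) =
     (\<Sum>q<n. \<Sum>l<n. \<Sum>q'<n. \<Sum>l'<n. Const (M q l * N q' l')
        * (if z + l = z' + q' then Var (z + q) * pdiff (z' + l') f else 0))
   + (\<Sum>q<n. \<Sum>l<n. \<Sum>q'<n. \<Sum>l'<n. Const (M q l * N q' l')
        * (Var (z + q) * Var (z' + q') * pdiff (z + l) (pdiff (z' + l') f)))"
  unfolding linear_vf_def sum.distrib[symmetric]
  by (intro sum.cong refl)
    (simp add: pdiff_sum pdiff_mult pdiff_Var sum_distrib_left sum.distrib[symmetric],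
     intro sum.cong refl, auto simp: algebra_simps Const_mult)

lemma linear_vf_second_order_symmetric:
  "(\<Sum>q<n. \<Sum>l<n. \<Sum>q'<n. \<Sum>l'<n. Const (M q l * N q' l')
      * (Var (z + q) * Var (z' + q') * pdiff (z + l) (pdiff (z' + l') f)))
   = (\<Sum>q<n. \<Sum>l<n. \<Sum>q'<n. \<Sum>l'<n. Const (N q l * M q' l')
      * (Var (z' + q) * Var (z + q') * pdiff (z' + l) (pdiff (z + l') f)))"
  by (subst sum_swap_pairs) (intro sum.cong refl, simp add: pdiff_commute mult_ac)

lemma linear_vf_commutator:
  "linear_vf n z M (linear_vf n z N f) - linear_vf n z N (linear_vf n z M f)
     = linear_vf n z (\<lambda>q l'. \<Sum>l<n. M q l * N l l' - N q l * M l l') f"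
proof -
  have first_order: "(\<Sum>q<n. \<Sum>l<n. \<Sum>q'<n. \<Sum>l'<n. Const (M q l * N q' l')
        * (if z + l = z + q' then Var (z + q) * pdiff (z + l') f else 0))
      = linear_vf n z (\<lambda>q l'. \<Sum>l<n. M q l * N l l') f" for M N
  proof -
    have "(\<Sum>q'<n. \<Sum>l'<n. Const (M q l * N q' l')
        * (if z + l = z + q' then Var (z + q) * pdiff (z + l') f else 0))
      = (\<Sum>l'<n. Const (M q l * N l l') * (Var (z + q) * pdiff (z + l') f))" if "l < n" for q l
    proof -
      have "(\<Sum>q'<n. \<Sum>l'<n. Const (M q l * N q' l')
          * (if z + l = z + q' then Var (z + q) * pdiff (z + l') f else 0))
        = (\<Sum>q'<n. if q' = l then \<Sum>l'<n. Const (M q l * N q' l') * (Var (z + q) * pdiff (z + l') f) else 0)"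
        by (intro sum.cong refl) auto
      with that show ?thesis
        by simp
    qed
    then have "(\<Sum>q<n. \<Sum>l<n. \<Sum>q'<n. \<Sum>l'<n. Const (M q l * N q' l')
        * (if z + l = z + q' then Var (z + q) * pdiff (z + l') f else 0))
      = (\<Sum>q<n. \<Sum>l<n. \<Sum>l'<n. Const (M q l * N l l') * (Var (z + q) * pdiff (z + l') f))"
      by simp
    also have "\<dots> = (\<Sum>q<n. \<Sum>l'<n. \<Sum>l<n. Const (M q l * N l l') * (Var (z + q) * pdiff (z + l') f))"
      by (rule sum.cong[OF refl], rule sum.swap)
    also have "\<dots> = linear_vf n z (\<lambda>q l'. \<Sum>l<n. M q l * N l l') f"
      unfolding linear_vf_def by (simp add: Const_sum sum_distrib_right)
    finally show ?thesis .
  qed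
  show ?thesis
    unfolding linear_vf_linear_vf first_order
    using linear_vf_second_order_symmetric[where M = M and N = N and z = z and z' = z and f = f]
    by (simp add: sum_subtractf linear_vf_def Const_diff algebra_simps)
qed

lemma linear_vf_commute:
  assumes "z + n \<le> z' \<or> z' + n \<le> z"
  shows "linear_vf n z M (linear_vf n z' N f) = linear_vf n z' N (linear_vf n z M f)"
proof -
  have no_first_order: "(\<Sum>q<n. \<Sum>l<n. \<Sum>q'<n. \<Sum>l'<n. Const (M q l * N q' l')
      * (if z + l = z' + q' then Var (z + q) * pdiff (z' + l') f else 0)) = 0"
    if "z + n \<le> z' \<or> z' + n \<le> z" for z z' M N
    using that by (intro sum.neutral ballI) auto
  show ?thesis
    unfolding linear_vf_linear_vf no_first_order[OF assms] no_first_order[of z' z]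
    using assms linear_vf_second_order_symmetric[where M = M and N = N and z = z and z' = z' and f = f] by auto
qed

definition basis_vec :: "nat \<Rightarrow> nat \<Rightarrow> 'k::comm_ring_1" where
  "basis_vec i = (\<lambda>t. if t = i then 1 else 0)"

lemma sum_basis_vec: "x < n \<Longrightarrow> (\<Sum>t<n. basis_vec x t * f t) = f x"
  by (simp add: basis_vec_def if_distrib[of "\<lambda>y. y * _"] cong: if_cong)

lemma amul_basis_vec_left:
  assumes "i < n"
  shows "amul n c (basis_vec i) w k = (if k < n then \<Sum>t<n. w t * c i t k else 0)"
proof -
  have "(\<Sum>a<n. \<Sum>b<n. basis_vec i a * w b * c a b k) = (\<Sum>a<n. basis_vec i a * (\<Sum>b<n. w b * c a b k))"
    by (simp add: sum_distrib_left mult_ac)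
  with assms show ?thesis
    unfolding amul_def by (simp add: sum_basis_vec)
qed

lemma amul_basis_vec_right:
  assumes "l < n"
  shows "amul n c w (basis_vec l) k = (if k < n then \<Sum>u<n. w u * c u l k else 0)"
proof -
  have "(\<Sum>b<n. w a * basis_vec l b * c a b k) = w a * c a l k" for a
    using sum_basis_vec[OF assms, of "\<lambda>b. w a * c a b k"] by (simp add: mult_ac)
  then show ?thesis
    unfolding amul_def by simp
qed

lemma assoc_alg_structure_constants:
  assumes "assoc_alg n c" and "i < n" "j < n" "l < n" "k < n"
  shows "(\<Sum>u<n. c i j u * c u l k) = (\<Sum>u<n. c j l u * c i u k)"
proof -
  have "basis_vec x \<in> vecs n" if "x < n" for x
    using that by (simp add: vecs_def basis_vec_def)
  with assms have "amul n c (amul n c (basis_vec i) (basis_vec j)) (basis_vec l) k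
      = amul n c (basis_vec i) (amul n c (basis_vec j) (basis_vec l)) k"
    unfolding assoc_alg_def by metis
  moreover have "amul n c (amul n c (basis_vec i) (basis_vec j)) (basis_vec l) k = (\<Sum>u<n. c i j u * c u l k)"
    using assms by (simp add: amul_basis_vec_left amul_basis_vec_right sum_basis_vec mult.commute)
  moreover have "amul n c (basis_vec i) (amul n c (basis_vec j) (basis_vec l)) k = (\<Sum>u<n. c j l u * c i u k)"
    using assms by (simp add: amul_basis_vec_left amul_basis_vec_right sum_basis_vec mult.commute)
  ultimately show ?thesis
    by simp
qed

text \<open>The vector field x \<mapsto> e_a x (if left) or x \<mapsto> x e_a on the copy of A at offset z.\<close>

definition mult_vf ::
    "nat \<Rightarrow> (nat \<Rightarrow> nat \<Rightarrow> nat \<Rightarrow> 'k::comm_ring_1) \<Rightarrow> nat \<Rightarrow> bool \<Rightarrow> nat \<Rightarrow> 'k mpoly \<Rightarrow> 'k mpoly"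
  where
  "mult_vf n c z left a = linear_vf n z (if left then (\<lambda>q l. c a q l) else (\<lambda>q l. c q a l))"

lemma mult_vf_0 [simp]: "mult_vf n c z left a 0 = 0"
  by (simp add: mult_vf_def)

lemma derivation_mult_vf: "derivation (mult_vf n c z left a)"
  by (simp add: derivation_def mult_vf_def linear_vf_add linear_vf_mult)

lemma mult_vf_Var:
  "l < n \<Longrightarrow> mult_vf n c z left a (Var (z + l)) = (\<Sum>q<n. Const (if left then c a q l else c q a l) * Var (z + q))"
  by (cases left) (simp_all add: mult_vf_def linear_vf_Var)

lemma mult_vf_Var_outside: "v < z \<or> z + n \<le> v \<Longrightarrow> mult_vf n c z left a (Var v) = 0"
  by (simp add: mult_vf_def linear_vf_Var_outside)

lemma mult_vf_commutator:
  assumes "assoc_alg n c" and "a < n" "b < n"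
  shows "mult_vf n c z left a (mult_vf n c z left b f) - mult_vf n c z left b (mult_vf n c z left a f)
       = (\<Sum>k<n. Const (if left then lc c b a k else lc c a b k) * mult_vf n c z left k f)"
proof -
  define M where "M a = (if left then (\<lambda>q l. c a q l) else (\<lambda>q l. c q a l))" for a
  have "(\<Sum>l<n. M a q l * M b l l' - M b q l * M a l l')
      = (\<Sum>k<n. (if left then lc c b a k else lc c a b k) * M k q l')" if "q < n" "l' < n" for q l'
  proof (cases left)
    case True
    then show ?thesis
      using assoc_alg_structure_constants[OF assms(1), of b a q l'] assoc_alg_structure_constants[OF assms(1), of a b q l']
        assms that by (simp add: M_def lc_def sum_subtractf right_diff_distrib mult.commute)
  next
    case False
    then show ?thesis
      using assoc_alg_structure_constants[OF assms(1), of q a b l'] assoc_alg_structure_constants[OF assms(1), of q b a l']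
        assms that by (simp add: M_def lc_def sum_subtractf right_diff_distrib mult.commute)
  qed
  then have "linear_vf n z (\<lambda>q l'. \<Sum>l<n. M a q l * M b l l' - M b q l * M a l l') f
      = linear_vf n z (\<lambda>q l'. \<Sum>k<n. (if left then lc c b a k else lc c a b k) * M k q l') f"
    by (rule linear_vf_cong)
  then show ?thesis
    unfolding mult_vf_def M_def[symmetric] linear_vf_commutator linear_vf_linear_combination .
qed

lemma mult_vf_left_right_commute:
  assumes "assoc_alg n c" and "a < n" "b < n"
  shows "mult_vf n c z True a (mult_vf n c z False b f) = mult_vf n c z False b (mult_vf n c z True a f)"
proof -
  have "(\<Sum>l<n. c a q l * c l b l' - c q b l * c a l l') = 0" if "q < n" "l' < n" for q l'
    using assms that assoc_alg_structure_constants[OF assms(1), of a q b l']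
    by (simp add: sum_subtractf mult.commute)
  then have "linear_vf n z (\<lambda>q l'. \<Sum>l<n. c a q l * c l b l' - c q b l * c a l l') f = linear_vf n z (\<lambda>_ _. 0) f"
    by (rule linear_vf_cong)
  then show ?thesis
    using linear_vf_commutator[of n z "\<lambda>q l. c a q l" "\<lambda>q l. c q b l" f]
    by (simp add: mult_vf_def linear_vf_def)
qed

section \<open>The Poisson structure 2 (r^L - r^R)\<close>

lemma CYBE_yb_tensor:
  assumes "CYBE n c r" and skew: "\<And>i j. r i j = - r j i" and "i < n" "k < n" "m < n"
  shows "yb_tensor {..<n} r (lc c) i k m + yb_tensor {..<n} r (lc c) k m i + yb_tensor {..<n} r (lc c) m i k = 0"
proof -
  have "comm_12_13 n c r i k m = yb_tensor {..<n} r (lc c) k m i"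
    unfolding comm_12_13_def yb_tensor_def
    by (intro sum.cong refl) (simp add: skew[of _ k] skew[of _ m])
  moreover have "comm_12_23 n c r i k m = yb_tensor {..<n} r (lc c) m i k"
  proof -
    have "yb_tensor {..<n} r (lc c) m i k = (\<Sum>a<n. \<Sum>b<n. r m b * r i a * lc c b a k)"
      unfolding yb_tensor_def by (rule sum.swap)
    also have "\<dots> = comm_12_23 n c r i k m"
      unfolding comm_12_23_def by (intro sum.cong refl) (simp add: skew[of m] lc_def algebra_simps)
    finally show ?thesis by simp
  qed
  moreover have "comm_13_23 n c r i k m = yb_tensor {..<n} r (lc c) i k m"
    unfolding comm_13_23_def yb_tensor_def ..
  moreover have "comm_12_13 n c r i k m + comm_12_23 n c r i k m + comm_13_23 n c r i k m = 0"
    using assms unfolding CYBE_def by blast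
  ultimately show ?thesis
    by (simp add: algebra_simps)
qed

text \<open>The bivector 2 (r^L - r^R) on the copy of A at offset z; the factor 2 comes from the
  convention x_i \<and> x_j = x_i \<otimes> x_j - x_j \<otimes> x_i behind dual_delta.\<close>

definition r_bracket ::
    "nat \<Rightarrow> (nat \<Rightarrow> nat \<Rightarrow> nat \<Rightarrow> 'k::comm_ring_1) \<Rightarrow> (nat \<Rightarrow> nat \<Rightarrow> 'k) \<Rightarrow> nat \<Rightarrow> 'k mpoly \<Rightarrow> 'k mpoly \<Rightarrow> 'k mpoly"
  where
  "r_bracket n c r z f g = (\<Sum>a<n. \<Sum>b<n. Const (2 * r a b)
     * (mult_vf n c z True a f * mult_vf n c z True b g - mult_vf n c z False a f * mult_vf n c z False b g))"

text \<open>The product structure on A^m, whose i-th factor has the variables i n, \<dots>, i n + n - 1.\<close>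

definition product_r_bracket ::
    "nat \<Rightarrow> (nat \<Rightarrow> nat \<Rightarrow> nat \<Rightarrow> 'k::comm_ring_1) \<Rightarrow> (nat \<Rightarrow> nat \<Rightarrow> 'k) \<Rightarrow> nat \<Rightarrow> 'k mpoly \<Rightarrow> 'k mpoly \<Rightarrow> 'k mpoly"
  where
  "product_r_bracket n c r m f g = (\<Sum>i<m. r_bracket n c r (i * n) f g)"

lemma mult_vf_distinct_blocks_commute:
  assumes "assoc_alg n c" and "(i, left) \<noteq> (j, left')" and "a < n" "b < n"
  shows "mult_vf n c (i * n) left a (mult_vf n c (j * n) left' b f)
    = mult_vf n c (j * n) left' b (mult_vf n c (i * n) left a f)"
proof (cases "i = j")
  case True
  with assms(2) have "left' = (\<not> left)"
    by auto
  with True assms(3,4) show ?thesis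
    using mult_vf_left_right_commute[OF assms(1), of a b "i * n" f]
      mult_vf_left_right_commute[OF assms(1), of b a "i * n" f]
    by (cases left) simp_all
next
  case False
  have "i * n + n \<le> j * n" if "i < j" for i j :: nat
    using mult_le_mono1[OF Suc_leI[OF that], of n] by (simp add: add.commute)
  with False have "i * n + n \<le> j * n \<or> j * n + n \<le> i * n"
    by (metis linorder_neqE_nat)
  then show ?thesis
    unfolding mult_vf_def by (rule linear_vf_commute)
qed

lemma product_r_bracket_block_sum:
  "product_r_bracket n c r m = (\<lambda>f g. \<Sum>p\<in>{..<m} \<times> UNIV. \<Sum>a<n. \<Sum>b<n.
     Const ((if snd p then 2 else -2) * r a b)
       * (mult_vf n c (fst p * n) (snd p) a f * mult_vf n c (fst p * n) (snd p) b g))"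
proof (intro ext)
  fix f g
  let ?M = "\<lambda>i left a b. Const ((if left then 2 else -2) * r a b)
    * (mult_vf n c (i * n) left a f * mult_vf n c (i * n) left b g)"
  have "(\<Sum>p\<in>{..<m} \<times> UNIV. \<Sum>a<n. \<Sum>b<n. ?M (fst p) (snd p) a b)
      = (\<Sum>i<m. \<Sum>left\<in>UNIV. \<Sum>a<n. \<Sum>b<n. ?M i left a b)"
    using sum.cartesian_product[of "\<lambda>i left. \<Sum>a<n. \<Sum>b<n. ?M i left a b" UNIV "{..<m}"]
    by (simp only: case_prod_unfold)
  also have "\<dots> = product_r_bracket n c r m f g"
    unfolding product_r_bracket_def r_bracket_def
    by (simp add: UNIV_bool Const_mult Const_uminus sum.distrib[symmetric] algebra_simps)
  finally show "product_r_bracket n c r m f g = (\<Sum>p\<in>{..<m} \<times> UNIV. \<Sum>a<n. \<Sum>b<n. ?M (fst p) (snd p) a b)"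
    by simp
qed

lemma product_r_bracket_poisson:
  assumes assoc: "assoc_alg n c" and skew: "\<And>i j. r i j = - r j i" and "CYBE n c r"
  shows "poisson_bracket (product_r_bracket n c r m)"
proof -
  define F where "F p a = mult_vf n c (fst p * n) (snd p) a" for p :: "nat \<times> bool" and a
  define L where "L p a b = (if snd p then 2 else -2) * r a b" for p :: "nat \<times> bool" and a b
  \<comment> \<open>The sign: a \<mapsto> e_a x reverses commutators, a \<mapsto> x e_a preserves them.\<close>
  define C where "C p a b d = (if snd p then -1 else 1) * lc c a b d" for p :: "nat \<times> bool" and a b d
  have "poisson_bracket (\<lambda>f g. \<Sum>p\<in>{..<m} \<times> UNIV. \<Sum>a<n. \<Sum>b<n. Const (L p a b) * (F p a f * F p b g))"
  proof (rule block_bivector_bracket_poisson[where C = C])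
    show "derivation (F p a)" for p a
      by (simp add: F_def derivation_mult_vf)
    show "L p a b = - L p b a" for p a b
      using skew[of a b] by (simp add: L_def)
    show "F p a (F p b f) - F p b (F p a f) = (\<Sum>d<n. Const (C p a b d) * F p d f)"
      if "a \<in> {..<n}" "b \<in> {..<n}" for p a b f
      using mult_vf_commutator[OF assoc, of a b "fst p * n" "snd p" f] that
      by (simp add: F_def C_def lc_def Const_uminus)
    show "F p a (F p' b f) = F p' b (F p a f)"
      if "p \<noteq> p'" "a \<in> {..<n}" "b \<in> {..<n}" for p p' a b f
      using mult_vf_distinct_blocks_commute[OF assoc, of "fst p" "snd p" "fst p'" "snd p'" a b f] that
      by (simp add: F_def prod_eq_iff)
    show "yb_tensor {..<n} (L p) (C p) i k m + yb_tensor {..<n} (L p) (C p) k m i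
        + yb_tensor {..<n} (L p) (C p) m i k = 0"
      if "i \<in> {..<n}" "k \<in> {..<n}" "m \<in> {..<n}" for p i k m
    proof -
      let ?s = "if snd p then 2 else -2" and ?t = "if snd p then -1 else 1"
      have "yb_tensor {..<n} (L p) (C p) i k m = ?s * ?s * ?t * yb_tensor {..<n} r (lc c) i k m" for i k m
        unfolding L_def C_def by (rule yb_tensor_scale)
      with CYBE_yb_tensor[OF \<open>CYBE n c r\<close> skew] that show ?thesis
        by (simp add: distrib_left[symmetric])
    qed
  qed simp
  then show ?thesis
    unfolding product_r_bracket_block_sum L_def F_def .
qed

lemma product_r_bracket_one: "product_r_bracket n c r 1 = r_bracket n c r 0"
  by (simp add: product_r_bracket_def fun_eq_iff)

lemma product_r_bracket_two: "product_r_bracket n c r 2 f g = r_bracket n c r 0 f g + r_bracket n c r n f g"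
  by (simp add: product_r_bracket_def numeral_2_eq_2)

section \<open>The bracket defined by delta\<close>

lemma tmul_transpose:
  assumes "\<And>a b. Y b a = s * Y a b" and "\<And>a b. Z b a = t * Z a b"
  shows "tmul n c Y Z j i = s * t * tmul n c Y Z i j"
proof (cases "i < n \<and> j < n")
  case True
  have "tmul n c Y Z j i = (\<Sum>a<n. \<Sum>b<n. \<Sum>a'<n. \<Sum>b'<n. Y a b * Z a' b' * c a a' j * c b b' i)"
    using True unfolding tmul_def by simp
  also have "\<dots> = (\<Sum>b<n. \<Sum>a<n. \<Sum>b'<n. \<Sum>a'<n. Y a b * Z a' b' * c a a' j * c b b' i)"
    by (subst sum.swap) (rule sum.cong[OF refl], rule sum.cong[OF refl], rule sum.swap)
  also have "\<dots> = (\<Sum>b<n. \<Sum>a<n. \<Sum>b'<n. \<Sum>a'<n. s * t * (Y b a * Z b' a' * c b b' i * c a a' j))"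
  proof (intro sum.cong refl)
    fix a b a' b'
    show "Y a b * Z a' b' * c a a' j * c b b' i = s * t * (Y b a * Z b' a' * c b b' i * c a a' j)"
      using assms(1)[of a b] assms(2)[of a' b'] by (simp add: mult_ac)
  qed
  also have "\<dots> = s * t * tmul n c Y Z i j"
    using True unfolding tmul_def by (simp add: sum_distrib_left)
  finally show ?thesis .
qed (auto simp: tmul_def)

lemma delta_skew:
  assumes skew: "\<And>i j. r i j = - r j i" and "symm_tensor n X"
  shows "skew_tensor n (delta n c r X)"
proof -
  have r: "\<And>a b. r b a = (- 1) * r a b"
    using skew by (metis mult_minus1)
  have X: "\<And>a b. X b a = 1 * X a b"
    using \<open>symm_tensor n X\<close> by (simp add: symm_tensor_def)
  have "delta n c r X j i = - delta n c r X i j" for i j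
    using tmul_transpose[of r "- 1" X 1 n c j i, OF r X] tmul_transpose[of X 1 r "- 1" n c j i, OF X r]
    by (simp add: delta_def)
  moreover have "delta n c r X i j = 0" if "n \<le> i \<or> n \<le> j" for i j
    using that by (auto simp: delta_def tmul_def)
  ultimately show ?thesis
    unfolding skew_tensor_def by blast
qed

lemma sum_sym_basis:
  fixes f :: "nat \<Rightarrow> nat \<Rightarrow> 'k::field"
  assumes "a < n" "b < n"
  shows "(\<Sum>a'<n. \<Sum>b'<n. sym_basis a b a' b' * f a' b') = (f a b + f b a) / 2"
proof -
  have "sym_basis a b a' b' * f a' b'
      = ((if a' = a then if b' = b then f a' b' else 0 else 0) + (if a' = b then if b' = a then f a' b' else 0 else 0)) / 2"
    for a' b'
    by (simp add: sym_basis_def)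
  then have "(\<Sum>a'<n. \<Sum>b'<n. sym_basis a b a' b' * f a' b')
      = ((\<Sum>a'<n. \<Sum>b'<n. if a' = a then if b' = b then f a' b' else 0 else 0)
        + (\<Sum>a'<n. \<Sum>b'<n. if a' = b then if b' = a then f a' b' else 0 else 0)) / 2"
    by (simp only: sum_divide_distrib[symmetric] sum.distrib)
  also have "\<dots> = (f a b + f b a) / 2"
  proof -
    have "(\<Sum>a'<n. \<Sum>b'<n. if a' = x then if b' = y then f a' b' else 0 else 0) = f x y"
      if "x < n" "y < n" for x y
    proof -
      have "(\<Sum>a'<n. \<Sum>b'<n. if a' = x then if b' = y then f a' b' else 0 else 0)
          = (\<Sum>a'<n. if a' = x then f a' y else 0)"
        using that by (intro sum.cong refl) simp
      with that show ?thesis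
        by simp
    qed
    with assms show ?thesis
      by simp
  qed
  finally show ?thesis .
qed

text \<open>The coefficient of x_a x_b in (r^L - r^R)(x_i, x_j).\<close>

definition r_coeff ::
    "nat \<Rightarrow> (nat \<Rightarrow> nat \<Rightarrow> nat \<Rightarrow> 'k::comm_ring_1) \<Rightarrow> (nat \<Rightarrow> nat \<Rightarrow> 'k) \<Rightarrow> nat \<Rightarrow> nat \<Rightarrow> nat \<Rightarrow> nat \<Rightarrow> 'k"
  where
  "r_coeff n c r i j a b = (\<Sum>u<n. \<Sum>v<n. r u v * (c u a i * c v b j - c a u i * c b v j))"

lemma delta_sym_basis:
  fixes r :: "nat \<Rightarrow> nat \<Rightarrow> 'k::field"
  assumes "a < n" "b < n" "i < n" "j < n"
  shows "delta n c r (sym_basis a b) i j = (r_coeff n c r i j a b + r_coeff n c r i j b a) / 2"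
proof -
  have "tmul n c r (sym_basis a b) i j
      = (\<Sum>u<n. \<Sum>v<n. r u v * (\<Sum>a'<n. \<Sum>b'<n. sym_basis a b a' b' * (c u a' i * c v b' j)))"
    unfolding tmul_def using assms by (simp add: sum_distrib_left mult_ac)
  also have "\<dots> = (\<Sum>u<n. \<Sum>v<n. r u v * ((c u a i * c v b j + c u b i * c v a j) / 2))"
    using assms by (simp add: sum_sym_basis)
  finally have rX: "tmul n c r (sym_basis a b) i j
      = (\<Sum>u<n. \<Sum>v<n. r u v * ((c u a i * c v b j + c u b i * c v a j) / 2))" .
  have "tmul n c (sym_basis a b) r i j
      = (\<Sum>a'<n. \<Sum>b'<n. sym_basis a b a' b' * (\<Sum>u<n. \<Sum>v<n. r u v * (c a' u i * c b' v j)))"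
    unfolding tmul_def using assms by (simp add: sum_distrib_left mult_ac)
  also have "\<dots> = ((\<Sum>u<n. \<Sum>v<n. r u v * (c a u i * c b v j)) + (\<Sum>u<n. \<Sum>v<n. r u v * (c b u i * c a v j))) / 2"
    using assms by (simp add: sum_sym_basis)
  finally have Xr: "tmul n c (sym_basis a b) r i j
      = ((\<Sum>u<n. \<Sum>v<n. r u v * (c a u i * c b v j)) + (\<Sum>u<n. \<Sum>v<n. r u v * (c b u i * c a v j))) / 2" .
  show ?thesis
    unfolding delta_def rX Xr r_coeff_def
    by (simp add: sum_subtractf sum_divide_distrib[symmetric] sum.distrib[symmetric] field_simps)
qed

lemma r_coeff_transpose:
  assumes skew: "\<And>i j. r i j = - r j i"
  shows "r_coeff n c r j i a b = - r_coeff n c r i j b a"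
proof -
  have "r_coeff n c r j i a b = (\<Sum>u<n. \<Sum>v<n. r v u * (c v a j * c u b i - c a v j * c b u i))"
    unfolding r_coeff_def by (rule sum.swap)
  also have "\<dots> = - r_coeff n c r i j b a"
    unfolding r_coeff_def sum_negf[symmetric]
  proof (intro sum.cong refl)
    fix u v
    show "r v u * (c v a j * c u b i - c a v j * c b u i) = - (r u v * (c u b i * c v a j - c b u i * c a v j))"
      using skew[of v u] by (simp add: algebra_simps)
  qed
  finally show ?thesis .
qed

lemma dual_delta_eq:
  fixes r :: "nat \<Rightarrow> nat \<Rightarrow> 'k::field_char_0"
  assumes skew: "\<And>i j. r i j = - r j i" and "a < n" "b < n" "i < n" "j < n"
  shows "dual_delta n c r i j a b = r_coeff n c r i j a b + r_coeff n c r i j b a"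
  unfolding dual_delta_def using assms(2-5)
  by (simp add: delta_sym_basis r_coeff_transpose[OF skew, where n = n and c = c and i = i and j = j] field_simps)

lemma product_of_linear_forms:
  "(\<Sum>q\<in>Q. Const (\<alpha> q) * X q) * (\<Sum>q\<in>Q. Const (\<beta> q) * X q)
     = (\<Sum>q\<in>Q. \<Sum>q'\<in>Q. Const (\<alpha> q * \<beta> q') * (X q * X q' :: 'k::comm_ring_1 mpoly))"
  by (simp add: sum_product Const_mult mult_ac)

lemma quadratic_form_symmetrize:
  "(\<Sum>a\<in>Q. \<Sum>b\<in>Q. Const (K a b + K b a) * (X a * X b))
     = (\<Sum>a\<in>Q. \<Sum>b\<in>Q. Const (2 * K a b) * (X a * X b :: 'k::comm_ring_1 mpoly))"
proof -
  have "(\<Sum>a\<in>Q. \<Sum>b\<in>Q. Const (K b a) * (X a * X b)) = (\<Sum>b\<in>Q. \<Sum>a\<in>Q. Const (K b a) * (X b * X a))"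
    by (rule sum.swap[THEN trans], intro sum.cong refl) (rule arg_cong[where f = "\<lambda>x. _ * x"], rule mult.commute)
  then show ?thesis
    by (simp only: Const_add mult_2 distrib_right sum.distrib)
qed

lemma r_bracket_Var_outside:
  assumes "v < z \<or> z + n \<le> v"
  shows "r_bracket n c r z (Var v) g = 0" and "r_bracket n c r z f (Var v) = 0"
  using assms by (simp_all add: r_bracket_def mult_vf_Var_outside)

lemma r_bracket_Var:
  fixes r :: "nat \<Rightarrow> nat \<Rightarrow> 'k::field_char_0"
  assumes skew: "\<And>i j. r i j = - r j i" and "i < n" "j < n"
  shows "r_bracket n c r z (Var (z + i)) (Var (z + j))
       = (\<Sum>a<n. \<Sum>b<n. Const (dual_delta n c r i j a b) * Var (z + a) * Var (z + b))"
proof -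
  let ?X = "\<lambda>q. Var (z + q)"
  have "r_bracket n c r z (Var (z + i)) (Var (z + j))
      = (\<Sum>a<n. \<Sum>b<n. Const (2 * r a b)
          * (\<Sum>q<n. \<Sum>q'<n. Const (c a q i * c b q' j - c q a i * c q' b j) * (?X q * ?X q')))"
    unfolding r_bracket_def using assms(2,3)
    by (simp add: mult_vf_Var product_of_linear_forms Const_diff left_diff_distrib sum_subtractf)
  also have "\<dots> = (\<Sum>a<n. \<Sum>b<n. \<Sum>q<n. \<Sum>q'<n.
      Const (2 * r a b * (c a q i * c b q' j - c q a i * c q' b j)) * (?X q * ?X q'))"
    by (simp add: sum_distrib_left Const_mult mult.assoc)
  also have "\<dots> = (\<Sum>q<n. \<Sum>q'<n. Const (2 * r_coeff n c r i j q q') * (?X q * ?X q'))"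
    unfolding r_coeff_def
    by (subst sum_swap_pairs) (simp add: Const_sum sum_distrib_left sum_distrib_right algebra_simps)
  also have "\<dots> = (\<Sum>a<n. \<Sum>b<n. Const (dual_delta n c r i j a b) * (?X a * ?X b))"
    using assms(2,3) by (simp add: dual_delta_eq[OF skew] quadratic_form_symmetrize)
  finally show ?thesis
    by (simp add: mult.assoc)
qed

lemma r_bracket_Var_Var:
  fixes r :: "nat \<Rightarrow> nat \<Rightarrow> 'k::field_char_0"
  assumes skew: "\<And>i j. r i j = - r j i"
  shows "r_bracket n c r z (Var v) (Var w)
       = (if z \<le> v \<and> v < z + n \<and> z \<le> w \<and> w < z + n
          then subst (\<lambda>u. Var (z + u)) (lin_bracket n c r (v - z) (w - z)) else 0)"
proof (cases "z \<le> v \<and> v < z + n \<and> z \<le> w \<and> w < z + n")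
  case True
  then obtain i j where "v = z + i" "w = z + j" "i < n" "j < n"
    by (metis add_diff_inverse_nat add_less_cancel_left not_less)
  then show ?thesis
    by (simp add: r_bracket_Var[OF skew] lin_bracket_def subst_sum subst_mult)
next
  case False
  then show ?thesis
    by (auto simp: r_bracket_Var_outside)
qed

lemma brackets_on_A_product_r_bracket:
  fixes r :: "nat \<Rightarrow> nat \<Rightarrow> 'k::field_char_0"
  assumes "\<And>i j. r i j = - r j i"
  shows "brackets_on_A n c r (product_r_bracket n c r 1)"
  unfolding brackets_on_A_def product_r_bracket_one
  using r_bracket_Var_Var[where r = r and n = n and c = c and z = 0, OF assms]
  by (simp add: subst_Var_id)

lemma brackets_on_AxA_product_r_bracket:
  fixes r :: "nat \<Rightarrow> nat \<Rightarrow> 'k::field_char_0"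
  assumes "\<And>i j. r i j = - r j i"
  shows "brackets_on_AxA n c r (product_r_bracket n c r 2)"
  unfolding brackets_on_AxA_def product_r_bracket_two
  using r_bracket_Var_Var[where r = r and n = n and c = c and z = 0, OF assms]
    r_bracket_Var_Var[where r = r and n = n and c = c and z = n, OF assms]
  by (auto simp: subst_Var_id shift_def)

section \<open>Multiplication is a Poisson map\<close>

definition bilinear :: "nat \<Rightarrow> (nat \<Rightarrow> nat \<Rightarrow> 'k::comm_ring_1) \<Rightarrow> 'k mpoly" where
  "bilinear n B = (\<Sum>i<n. \<Sum>j<n. Const (B i j) * (Var i * Var (n + j)))"

lemma bilinear_cong: "(\<And>i j. i < n \<Longrightarrow> j < n \<Longrightarrow> B i j = B' i j) \<Longrightarrow> bilinear n B = bilinear n B'"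
  unfolding bilinear_def by (intro sum.cong refl) auto

lemma linear_vf_bilinear_first: "linear_vf n 0 M (bilinear n B) = bilinear n (\<lambda>q j. \<Sum>i<n. B i j * M q i)"
proof -
  have "linear_vf n 0 M (bilinear n B) = (\<Sum>i<n. \<Sum>j<n. \<Sum>q<n. Const (B i j * M q i) * (Var q * Var (n + j)))"
    unfolding bilinear_def linear_vf_sum
    by (intro sum.cong refl)
      (simp add: linear_vf_mult linear_vf_Var[where z = 0, simplified] linear_vf_Var_outside
        sum_distrib_left sum_distrib_right Const_mult mult_ac)
  also have "\<dots> = (\<Sum>q<n. \<Sum>j<n. \<Sum>i<n. Const (B i j * M q i) * (Var q * Var (n + j)))"
    by (subst sum_rotate3) (rule sum.cong[OF refl], rule sum.swap)
  also have "\<dots> = bilinear n (\<lambda>q j. \<Sum>i<n. B i j * M q i)"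
    unfolding bilinear_def by (simp add: Const_sum sum_distrib_right)
  finally show ?thesis .
qed

lemma linear_vf_bilinear_second: "linear_vf n n M (bilinear n B) = bilinear n (\<lambda>i q. \<Sum>j<n. B i j * M q j)"
proof -
  have "linear_vf n n M (bilinear n B) = (\<Sum>i<n. \<Sum>j<n. \<Sum>q<n. Const (B i j * M q j) * (Var i * Var (n + q)))"
    unfolding bilinear_def linear_vf_sum
    by (intro sum.cong refl)
      (simp add: linear_vf_mult linear_vf_Var linear_vf_Var_outside
        sum_distrib_left sum_distrib_right Const_mult mult_ac)
  also have "\<dots> = (\<Sum>i<n. \<Sum>q<n. \<Sum>j<n. Const (B i j * M q j) * (Var i * Var (n + q)))"
    by (rule sum.cong[OF refl], rule sum.swap)
  also have "\<dots> = bilinear n (\<lambda>i q. \<Sum>j<n. B i j * M q j)"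
    unfolding bilinear_def by (simp add: Const_sum sum_distrib_right)
  finally show ?thesis .
qed

lemma mult_pullback_Var: "k < n \<Longrightarrow> mult_pullback n c (Var k) = bilinear n (\<lambda>i j. c i j k)"
  by (simp add: mult_pullback_def bilinear_def mult.assoc)

lemma mult_pullback_linear:
  "mult_pullback n c (\<Sum>q<n. Const (\<alpha> q) * Var q) = bilinear n (\<lambda>i j. \<Sum>q<n. \<alpha> q * c i j q)"
proof -
  have "mult_pullback n c (\<Sum>q<n. Const (\<alpha> q) * Var q)
      = (\<Sum>q<n. \<Sum>i<n. \<Sum>j<n. Const (\<alpha> q * c i j q) * (Var i * Var (n + j)))"
    unfolding mult_pullback_def by (simp add: subst_sum subst_mult sum_distrib_left Const_mult mult_ac)
  also have "\<dots> = (\<Sum>i<n. \<Sum>j<n. \<Sum>q<n. Const (\<alpha> q * c i j q) * (Var i * Var (n + j)))"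
    by (rule sum_rotate3[symmetric])
  also have "\<dots> = bilinear n (\<lambda>i j. \<Sum>q<n. \<alpha> q * c i j q)"
    unfolding bilinear_def by (simp add: Const_sum sum_distrib_right)
  finally show ?thesis .
qed

lemma mult_vf_pullback_left:
  assumes "assoc_alg n c" "a < n"
  shows "mult_vf n c 0 True a (mult_pullback n c f) = mult_pullback n c (mult_vf n c 0 True a f)"
  unfolding mult_pullback_def
proof (rule derivation_subst_eqI[OF derivation_mult_vf derivation_mult_vf], fold mult_pullback_def)
  fix v
  show "mult_vf n c 0 True a (mult_pullback n c (Var v)) = mult_pullback n c (mult_vf n c 0 True a (Var v))"
  proof (cases "v < n")
    case True
    have "bilinear n (\<lambda>q j. \<Sum>i<n. c i j v * c a q i) = bilinear n (\<lambda>i j. \<Sum>q<n. c a q v * c i j q)"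
      using assoc_alg_structure_constants[OF assms(1) assms(2) _ _ True]
      by (intro bilinear_cong) (simp add: mult.commute)
    with True show ?thesis
      using mult_vf_Var[of v n c 0 True a]
      by (simp add: mult_pullback_Var mult_vf_def linear_vf_bilinear_first mult_pullback_linear)
  qed (simp add: mult_vf_Var_outside mult_pullback_def)
qed

lemma mult_vf_pullback_right:
  assumes "assoc_alg n c" "a < n"
  shows "mult_vf n c n False a (mult_pullback n c f) = mult_pullback n c (mult_vf n c 0 False a f)"
  unfolding mult_pullback_def
proof (rule derivation_subst_eqI[OF derivation_mult_vf derivation_mult_vf], fold mult_pullback_def)
  fix v
  show "mult_vf n c n False a (mult_pullback n c (Var v)) = mult_pullback n c (mult_vf n c 0 False a (Var v))"
  proof (cases "v < n")
    case True
    have "bilinear n (\<lambda>i q. \<Sum>j<n. c i j v * c q a j) = bilinear n (\<lambda>i j. \<Sum>q<n. c q a v * c i j q)"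
      using assoc_alg_structure_constants[OF assms(1) _ _ assms(2) True]
      by (intro bilinear_cong) (simp add: mult.commute)
    with True show ?thesis
      using mult_vf_Var[of v n c 0 False a]
      by (simp add: mult_pullback_Var mult_vf_def linear_vf_bilinear_second mult_pullback_linear)
  qed (simp add: mult_vf_Var_outside mult_pullback_def)
qed

text \<open>This is (x e_a) y = x (e_a y).\<close>

lemma mult_vf_pullback_middle:
  assumes "assoc_alg n c" "a < n"
  shows "mult_vf n c 0 False a (mult_pullback n c f) = mult_vf n c n True a (mult_pullback n c f)"
  unfolding mult_pullback_def
proof (rule derivation_eq_on_subst_image[OF derivation_mult_vf derivation_mult_vf], fold mult_pullback_def)
  fix v
  show "mult_vf n c 0 False a (mult_pullback n c (Var v)) = mult_vf n c n True a (mult_pullback n c (Var v))"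
  proof (cases "v < n")
    case True
    have "bilinear n (\<lambda>q j. \<Sum>i<n. c i j v * c q a i) = bilinear n (\<lambda>i q. \<Sum>j<n. c i j v * c a q j)"
      using assoc_alg_structure_constants[OF assms(1) _ assms(2) _ True]
      by (intro bilinear_cong) (simp add: mult.commute)
    with True show ?thesis
      by (simp add: mult_pullback_Var mult_vf_def linear_vf_bilinear_first linear_vf_bilinear_second)
  qed (simp add: mult_pullback_def)
qed

lemma mult_pullback_product_r_bracket:
  assumes "assoc_alg n c"
  shows "product_r_bracket n c r 2 (mult_pullback n c f) (mult_pullback n c g)
       = mult_pullback n c (product_r_bracket n c r 1 f g)"
proof -
  let ?m = "mult_pullback n c"
  have "r_bracket n c r 0 (?m f) (?m g) + r_bracket n c r n (?m f) (?m g)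
      = (\<Sum>a<n. \<Sum>b<n. Const (2 * r a b) * (?m (mult_vf n c 0 True a f) * ?m (mult_vf n c 0 True b g)
          - ?m (mult_vf n c 0 False a f) * ?m (mult_vf n c 0 False b g)))"
    unfolding r_bracket_def sum.distrib[symmetric] using assms
    by (intro sum.cong refl)
      (simp add: mult_vf_pullback_left mult_vf_pullback_right mult_vf_pullback_middle algebra_simps)
  also have "\<dots> = ?m (r_bracket n c r 0 f g)"
    by (simp add: r_bracket_def mult_pullback_def subst_sum subst_mult subst_diff)
  finally show ?thesis
    unfolding product_r_bracket_one product_r_bracket_two .
qed

theorem corollary7:
  fixes n :: nat
    and c :: "nat \<Rightarrow> nat \<Rightarrow> nat \<Rightarrow> 'k::real_or_complex"
    and G :: "(nat \<Rightarrow> 'k) set"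
    and r :: "nat \<Rightarrow> nat \<Rightarrow> 'k"
  assumes "assoc_alg n c"
    and "lie_subalgebra n c G"
    and "in_wedge G r"
    and "CYBE n c r"
  shows "(\<forall>X. symm_tensor n X \<longrightarrow> skew_tensor n (delta n c r X))
       \<and> (\<exists>B B2. poisson_bracket B \<and> brackets_on_A n c r B
               \<and> poisson_bracket B2 \<and> brackets_on_AxA n c r B2
               \<and> (\<forall>f g. B2 (mult_pullback n c f) (mult_pullback n c g) = mult_pullback n c (B f g)))"
proof -
  have skew: "\<And>i j. r i j = - r j i"
    using \<open>in_wedge G r\<close> unfolding in_wedge_def by blast
  have "poisson_bracket (product_r_bracket n c r 1)" "poisson_bracket (product_r_bracket n c r 2)"
    using product_r_bracket_poisson[where r = r, OF \<open>assoc_alg n c\<close> skew \<open>CYBE n c r\<close>] by blast+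
  moreover have "brackets_on_A n c r (product_r_bracket n c r 1)"
    and "brackets_on_AxA n c r (product_r_bracket n c r 2)"
    using brackets_on_A_product_r_bracket[where r = r, OF skew]
      brackets_on_AxA_product_r_bracket[where r = r, OF skew] by blast+
  moreover have "\<forall>f g. product_r_bracket n c r 2 (mult_pullback n c f) (mult_pullback n c g)
      = mult_pullback n c (product_r_bracket n c r 1 f g)"
    using mult_pullback_product_r_bracket[OF \<open>assoc_alg n c\<close>] by blast
  ultimately show ?thesis
    using delta_skew[where r = r, OF skew] by blast
qed

end
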